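(* Let $a\neq b$ be complex numbers and let $P,Q\in\mathbb{C}[x]$ satisfy $P(a)=P(b)=0$, $Q(a)=Q(b)=0$; put $p=P'$, $q=Q'$. Suppose the Abel equation $y'=p(x)y^3+q(x)y^2$ has a parametric center on $[a,b]$. Then either $P,Q$ satisfy the Composition Condition on $[a,b]$, or both $P$ and $Q$ are non-definite, $P\in Z(Q)$ and $Q\in Z(P)$.
   Context: Let $\mathcal{P}$ be the space of complex polynomials $R$ with $R(a)=R(b)=0$. The equation $y'=p(x)y^3+\epsilon q(x)y^2$ has a center on $[a,b]$ if every solution with $|y(a)|$ sufficiently small satisfies $y(b)=y(a)$ (continuation along the segment $[a,b]$); the equation $y'=p y^3+q y^2$ has a parametric center on $[a,b]$ if for every $\epsilon\in\mathbb{C}$ the equation $y'=p y^3+\epsilon q y^2$ has a center on $[a,b]$. Polynomials $P,Q$ satisfy the Composition Condition on $[a,b]$ if there exist polynomials $\widetilde P,\widetilde Q,W$ with $W(a)=W(b)$ such that $P=\widetilde P\circ W$ and $Q=\widetilde Q\circ W$. For $P\in\mathcal{P}$, $Z(P)$ is the set of $Q\in\mathcal{P}$ such that $\int_a^b P^i(x)Q'(x)\,dx=0$ for all $i\ge 0$. A polynomial $P\in\mathcal{P}$ is ($[a,b]$-)definite if for every $Q\in\mathcal{P}$ with $Q\in Z(P)$, the pair $P,Q$ satisfies the Composition Condition on $[a,b]$; otherwise it is non-definite. *)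

theory Defs
  imports "HOL-Complex_Analysis.Complex_Analysis" "HOL-Computational_Algebra.Polynomial"
begin

definition vanish_ends :: "complex \<Rightarrow> complex \<Rightarrow> complex poly set" where
  "vanish_ends a b = {R. poly R a = 0 \<and> poly R b = 0}"

text \<open>Center of y' = p y^3 + eps q y^2 on the segment [a,b]: solutions are taken
  along the parametrised segment x(t) = a + t (b - a), t in [0,1], so that
  d/dt y(x(t)) = (b - a) * (p(x(t)) y^3 + eps q(x(t)) y^2).\<close>
definition abel_center ::
  "complex poly \<Rightarrow> complex poly \<Rightarrow> complex \<Rightarrow> complex \<Rightarrow> complex \<Rightarrow> bool" where
  "abel_center p q eps a b \<longleftrightarrow>
     (\<exists>\<delta>>0. \<forall>y :: real \<Rightarrow> complex.
        norm (y 0) < \<delta> \<and>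
        (\<forall>t\<in>{0..1}. (y has_vector_derivative
            ((b - a) * (poly p (linepath a b t) * (y t)^3
                        + eps * poly q (linepath a b t) * (y t)^2))) (at t within {0..1}))
        \<longrightarrow> y 1 = y 0)"

definition parametric_center ::
  "complex poly \<Rightarrow> complex poly \<Rightarrow> complex \<Rightarrow> complex \<Rightarrow> bool" where
  "parametric_center p q a b \<longleftrightarrow> (\<forall>eps. abel_center p q eps a b)"

definition composition_condition ::
  "complex poly \<Rightarrow> complex poly \<Rightarrow> complex \<Rightarrow> complex \<Rightarrow> bool" where
  "composition_condition P Q a b \<longleftrightarrow>
     (\<exists>Pt Qt W :: complex poly. poly W a = poly W b \<and> P = pcompose Pt W \<and> Q = pcompose Qt W)"

definition Zset :: "complex poly \<Rightarrow> complex \<Rightarrow> complex \<Rightarrow> complex poly set" where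
  "Zset P a b = {Q \<in> vanish_ends a b.
      \<forall>i::nat. contour_integral (linepath a b) (\<lambda>x. poly (P ^ i * pderiv Q) x) = 0}"

definition definite :: "complex poly \<Rightarrow> complex \<Rightarrow> complex \<Rightarrow> bool" where
  "definite P a b \<longleftrightarrow> P \<in> vanish_ends a b \<and>
     (\<forall>Q \<in> vanish_ends a b. Q \<in> Zset P a b \<longrightarrow> composition_condition P Q a b)"

definition non_definite :: "complex poly \<Rightarrow> complex \<Rightarrow> complex \<Rightarrow> bool" where
  "non_definite P a b \<longleftrightarrow> P \<in> vanish_ends a b \<and> \<not> definite P a b"

end

theory Submission
  imports Defs "HOL-Library.Function_Algebras"
begin

(*
  Parametrise the segment by t in [0,1] and let w = sol alpha beta be the solution of
  w' = alpha p w^3 + beta q w^2 with w 0 = 1; for small parameters it is obtained by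
  Picard iteration and is holomorphic in beta.  The rescaling y = mu w, with
  (alpha, beta) = (mu^2, eps mu), turns it into the Abel equation with parameter eps,
  so a parametric centre gives w 1 = 1 for every eps and all small mu > 0.  Uncountably
  many eps share a common bound on mu, so analytic continuation in beta yields w 1 = 1
  for all small alpha > 0 and all small beta.

  Along solutions, 1/w + beta Q and 1/w^2 + 2 alpha P have derivatives -alpha p w and
  -2 beta q/w.  Hence w 1 = 1 forces int p w = 0 and int q/w = 0.  Letting alpha -> 0
  (where w = 1/(1 - beta Q)) resp. beta -> 0 (where 1/w = sqrt (1 - 2 alpha P)) and
  comparing Taylor coefficients gives int p Q^k = int q P^k = 0, that is Q in Z(P) and
  P in Z(Q).  If the composition condition fails, both P and Q are then non-definite.
*)

lemma norm_integral_le_unit_interval: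
  fixes g :: "real \<Rightarrow> complex"
  assumes "continuous_on {0..1} g" "t \<in> {0..1}" "\<And>s. s \<in> {0..1} \<Longrightarrow> norm (g s) \<le> B"
  shows "norm (integral {0..t} g) \<le> B"
proof -
  have B: "B \<ge> 0" using order.trans[OF norm_ge_zero assms(3)[of 0]] by simp
  have "norm (integral {0..t} g) \<le> B * (t - 0)"
    by (rule integral_bound) (use assms in \<open>auto intro: continuous_on_subset\<close>)
  also have "\<dots> \<le> B" using assms(2) B by (simp add: mult_left_le)
  finally show ?thesis .
qed

lemma le_of_le_add_half_power:
  fixes x c :: real
  assumes "\<And>n. x \<le> c + (1/2)^n"
  shows "x \<le> c"
proof (rule ccontr)
  assume "\<not> x \<le> c"
  then obtain n where "(1/2::real)^n < x - c" using real_arch_pow_inv[of "x - c" "1/2"] by auto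
  with assms[of n] show False by simp
qed

lemma eq_0_of_norm_le_linear:
  fixes m :: "'a::real_normed_vector"
  assumes "r > 0" "\<And>e. 0 < e \<Longrightarrow> e < r \<Longrightarrow> norm m \<le> C * e"
  shows "m = 0"
proof (rule ccontr)
  assume "m \<noteq> 0"
  then have m: "norm m > 0" by simp
  have "norm m \<le> C * (r/2)" using assms(1) by (intro assms(2)) auto
  then have "0 < C * (r/2)" using m by linarith
  then have C: "C > 0" using assms(1) by (simp add: zero_less_mult_iff)
  define e where "e = min (r/2) (norm m / (2*C))"
  have e: "0 < e" "e < r" using assms(1) m C by (auto simp: e_def min_def)
  have "C * e \<le> C * (norm m / (2*C))" using C by (intro mult_left_mono) (auto simp: e_def)
  also have "\<dots> = norm m / 2" using C by simp
  finally have "C * e \<le> norm m / 2" .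
  then show False using assms(2)[OF e] m by linarith
qed

lemma uniform_limit_of_geometric_bound:
  fixes f :: "nat \<Rightarrow> 'a \<Rightarrow> 'b::real_normed_vector"
  assumes "\<And>n x. x \<in> S \<Longrightarrow> norm (f n x - g x) \<le> (1/2)^n"
  shows "uniform_limit S f g sequentially"
  unfolding uniform_limit_iff
proof (intro allI impI)
  fix e :: real assume "0 < e"
  then obtain N where N: "(1/2::real)^N < e" using real_arch_pow_inv[of e "1/2"] by auto
  show "\<forall>\<^sub>F n in sequentially. \<forall>x\<in>S. dist (f n x) (g x) < e"
    unfolding eventually_sequentially
  proof (intro exI allI impI ballI)
    fix n x assume n: "N \<le> n" and "x \<in> S"
    have "(1/2::real)^n \<le> (1/2)^N" using power_decreasing[OF n, of "1/2::real"] by simp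
    then show "dist (f n x) (g x) < e" unfolding dist_norm using assms[OF \<open>x \<in> S\<close>, of n] N by linarith
  qed
qed

lemma has_integral_of_vector_derivative_unit_interval:
  fixes f :: "real \<Rightarrow> complex"
  assumes "\<And>s. s \<in> {0..1} \<Longrightarrow> (f has_vector_derivative f' s) (at s within {0..1})" "t \<in> {0..1}"
  shows "(f' has_integral (f t - f 0)) {0..t}"
proof (rule fundamental_theorem_of_calculus)
  show "0 \<le> t" using assms(2) by simp
  fix s assume s: "s \<in> {0..t}"
  then have "s \<in> {0..1}" using assms(2) by auto
  then show "(f has_vector_derivative f' s) (at s within {0..t})"
    by (rule has_vector_derivative_within_subset[OF assms(1)]) (use assms(2) in auto)
qed

lemma bounded_on_unit_interval:
  fixes f :: "real \<Rightarrow> complex"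
  assumes "continuous_on {0..1} f"
  obtains M where "M \<ge> 1" "\<And>s. s \<in> {0..1} \<Longrightarrow> norm (f s) \<le> M"
proof -
  have "bounded (f ` {0..1})" by (intro compact_imp_bounded compact_continuous_image assms) simp
  then obtain b where b: "\<And>x. x \<in> f ` {0..1} \<Longrightarrow> norm x \<le> b" unfolding bounded_iff by blast
  show ?thesis by (rule that[of "max b 1"]) (use b in \<open>auto intro: order.trans[OF _ max.cobounded1]\<close>)
qed

lemma integral_eq_0_of_approx:
  fixes f :: "real \<Rightarrow> complex" and g :: "real \<Rightarrow> real \<Rightarrow> complex"
  assumes "r > 0" and "continuous_on {0..1} f"
    and "\<And>e. 0 < e \<Longrightarrow> e < r \<Longrightarrow> continuous_on {0..1} (g e)"
    and "\<And>e. 0 < e \<Longrightarrow> e < r \<Longrightarrow> integral {0..1} (g e) = 0"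
    and "\<And>e s. 0 < e \<Longrightarrow> e < r \<Longrightarrow> s \<in> {0..1} \<Longrightarrow> norm (f s - g e s) \<le> C * e"
  shows "integral {0..1} f = 0"
proof (rule eq_0_of_norm_le_linear[OF assms(1)])
  fix e :: real assume e: "0 < e" "e < r"
  have "integral {0..1} f = integral {0..1} (\<lambda>s. f s - g e s)"
    using assms(4)[OF e] by (simp add: integral_diff integrable_continuous_real assms(2) assms(3)[OF e])
  also have "norm \<dots> \<le> C * e"
  proof (rule norm_integral_le_unit_interval)
    show "continuous_on {0..1} (\<lambda>s. f s - g e s)" by (intro continuous_on_diff assms(2) assms(3)[OF e])
  qed (use assms(5)[OF e] in auto)
  finally show "norm (integral {0..1} f) \<le> C * e" .
qed

lemma integral_mult_sum_powers:
  fixes f g :: "real \<Rightarrow> complex"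
  assumes "continuous_on {0..1} f" "continuous_on {0..1} g"
  shows "integral {0..1} (\<lambda>s. f s * (\<Sum>i\<le>k. c i * (of_real e * g s) ^ i))
    = (\<Sum>i\<le>k. c i * of_real e ^ i * integral {0..1} (\<lambda>s. f s * g s ^ i))"
proof -
  have int: "(\<lambda>s. f s * g s ^ i) integrable_on {0..1}" for i
    by (intro integrable_continuous_real continuous_intros assms)
  have "(\<lambda>s. f s * (\<Sum>i\<le>k. c i * (of_real e * g s) ^ i)) = (\<lambda>s. \<Sum>i\<le>k. c i * of_real e ^ i * (f s * g s ^ i))"
    by (simp add: sum_distrib_left power_mult_distrib algebra_simps)
  then show ?thesis by (simp add: integral_sum integrable_on_mult_right int integral_mult_right)
qed

text \<open>If all moments below \<open>k\<close> vanish, integrating \<open>f\<close> against the Taylor polynomial of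
  \<open>\<phi> e\<close> leaves \<open>c k e\<^sup>k m\<^sub>k\<close>, while the remainder is \<open>O(e\<^sup>k\<^sup>+\<^sup>1)\<close>; hence \<open>m\<^sub>k = O(e)\<close>.\<close>

lemma moments_eq_0_of_series_approx:
  fixes f g :: "real \<Rightarrow> complex" and c :: "nat \<Rightarrow> complex" and \<phi> :: "real \<Rightarrow> real \<Rightarrow> complex"
  assumes "continuous_on {0..1} f" "continuous_on {0..1} g" "\<And>k. c k \<noteq> 0" "r > 0"
    and "\<And>e. 0 < e \<Longrightarrow> e < r \<Longrightarrow> continuous_on {0..1} (\<phi> e)"
    and "\<And>e. 0 < e \<Longrightarrow> e < r \<Longrightarrow> integral {0..1} (\<lambda>s. f s * \<phi> e s) = 0"
    and "\<And>k. \<exists>r'>0. \<exists>C. \<forall>e s. 0 < e \<and> e < r' \<and> s \<in> {0..1} \<longrightarrow>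
           norm (\<phi> e s - (\<Sum>i\<le>k. c i * (of_real e * g s) ^ i)) \<le> C * e ^ (k+1)"
  shows "integral {0..1} (\<lambda>s. f s * g s ^ k) = 0"
proof (induction k rule: less_induct)
  case (less k)
  define m where "m i = integral {0..1} (\<lambda>s. f s * g s ^ i)" for i
  obtain r' C where r': "r' > 0"
    and approx: "\<And>e s. 0 < e \<Longrightarrow> e < r' \<Longrightarrow> s \<in> {0..1} \<Longrightarrow>
           norm (\<phi> e s - (\<Sum>i\<le>k. c i * (of_real e * g s) ^ i)) \<le> C * e ^ (k+1)"
    using assms(7)[of k] by blast
  obtain M where M: "\<And>s. s \<in> {0..1} \<Longrightarrow> norm (f s) \<le> M" using bounded_on_unit_interval[OF assms(1)] by blast
  have "m k = 0"
  proof (rule eq_0_of_norm_le_linear[where C = "M * C / norm (c k)"])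
    show "min r r' > 0" using assms(4) r' by simp
    fix e :: real assume e: "0 < e" "e < min r r'"
    have "integral {0..1} (\<lambda>s. f s * (\<Sum>i\<le>k. c i * (of_real e * g s) ^ i))
        = (\<Sum>i\<le>k. c i * of_real e ^ i * m i)"
      unfolding m_def by (rule integral_mult_sum_powers[OF assms(1,2)])
    also have "\<dots> = (\<Sum>i<k. c i * of_real e ^ i * m i) + c k * of_real e ^ k * m k"
      by (simp add: lessThan_Suc_atMost[symmetric])
    also have "(\<Sum>i<k. c i * of_real e ^ i * m i) = 0"
      using less by (intro sum.neutral) (simp add: m_def)
    finally have "c k * of_real e ^ k * m k
        = integral {0..1} (\<lambda>s. f s * ((\<Sum>i\<le>k. c i * (of_real e * g s) ^ i) - \<phi> e s))"
      using assms(6)[of e] e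
      by (simp add: right_diff_distrib integral_diff integrable_continuous_real continuous_intros
          assms(1,2,5))
    also have "norm \<dots> \<le> M * (C * e ^ (k+1))"
    proof (rule norm_integral_le_unit_interval)
      show "continuous_on {0..1} (\<lambda>s. f s * ((\<Sum>i\<le>k. c i * (of_real e * g s) ^ i) - \<phi> e s))"
        using e by (intro continuous_intros assms(1,2,5)) auto
      fix s :: real assume s: "s \<in> {0..1}"
      show "norm (f s * ((\<Sum>i\<le>k. c i * (of_real e * g s) ^ i) - \<phi> e s)) \<le> M * (C * e ^ (k+1))"
        unfolding norm_mult using M[OF s] approx[of e s] e s
        by (intro mult_mono) (auto simp: norm_minus_commute order.trans[OF norm_ge_zero])
    qed simp
    finally have "e ^ k * (norm (c k) * norm (m k)) \<le> e ^ k * (M * C * e)"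
      using e by (simp add: norm_mult norm_power algebra_simps)
    then have "norm (c k) * norm (m k) \<le> M * C * e"
      using e by (simp add: mult_le_cancel_left_pos)
    moreover have "norm (c k) > 0" using assms(3)[of k] by simp
    ultimately show "norm (m k) \<le> M * C / norm (c k) * e"
      by (simp add: field_simps)
  qed
  then show ?case by (simp add: m_def)
qed

lemma norm_inverse_one_minus_sub_sum_le:
  fixes x :: complex
  assumes "norm x \<le> 1/2"
  shows "norm (inverse (1 - x) - (\<Sum>i\<le>k. x ^ i)) \<le> 2 * norm x ^ (k+1)"
proof -
  have "norm (1 - x) \<ge> 1/2" using assms norm_triangle_ineq2[of 1 x] by simp
  then have nz: "1 - x \<noteq> 0" by auto
  have "inverse (1 - x) - (\<Sum>i\<le>k. x ^ i) = x ^ (k+1) / (1 - x)"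
    using sum_gp_basic[of x k] nz by (simp add: field_simps)
  also have "norm \<dots> \<le> norm x ^ (k+1) / (1/2)"
    unfolding norm_divide norm_power by (rule divide_left_mono) (use \<open>norm (1 - x) \<ge> 1/2\<close> in auto)
  finally show ?thesis by simp
qed

lemma holomorphic_eq_0_of_infinite_zeros:
  assumes "f holomorphic_on S" "open S" "connected S" "compact K" "K \<subseteq> S"
    and "Z \<subseteq> K" "infinite Z" "\<And>z. z \<in> Z \<Longrightarrow> f z = 0" "w \<in> S"
  shows "f w = 0"
proof -
  obtain \<xi> where "\<xi> \<in> K" "\<xi> islimpt Z" using assms(4,6,7) compact_eq_Bolzano_Weierstrass by blast
  then show ?thesis
    using analytic_continuation[OF assms(1-3) _ _ _ assms(8,9)] assms(5,6) by blast
qed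

lemma infinite_superlevel_set_in_ball:
  fixes \<delta> :: "complex \<Rightarrow> real"
  assumes "\<And>\<epsilon>. \<delta> \<epsilon> > 0"
  obtains d where "d > 0" "infinite {\<epsilon> \<in> ball 0 1. d < \<delta> \<epsilon>}"
proof -
  define E where "E m = {\<epsilon> \<in> ball (0::complex) 1. 1 / real (Suc m) < \<delta> \<epsilon>}" for m
  have "ball 0 1 \<subseteq> (\<Union>m. E m)"
  proof
    fix \<epsilon> :: complex assume "\<epsilon> \<in> ball 0 1"
    moreover obtain m where "inverse (real (Suc m)) < \<delta> \<epsilon>" using reals_Archimedean[OF assms] by blast
    ultimately show "\<epsilon> \<in> (\<Union>m. E m)" by (auto simp: E_def divide_inverse)
  qed
  moreover have "uncountable (ball (0::complex) 1)" by (simp add: uncountable_ball)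
  ultimately have "\<not> (\<forall>m. finite (E m))"
  proof (intro notI)
    assume "\<forall>m. finite (E m)"
    then have "countable (\<Union>m. E m)" by (intro countable_UN) (auto intro: countable_finite)
    then show False using \<open>ball 0 1 \<subseteq> (\<Union>m. E m)\<close> \<open>uncountable (ball 0 1)\<close> countable_subset by blast
  qed
  then show ?thesis using that[of "1 / real (Suc _)"] by (auto simp: E_def)
qed

section \<open>Taylor polynomials of the square root\<close>

text \<open>\<open>sqrt_taylor k\<close> is the Taylor polynomial of degree \<open>k\<close> of \<open>\<surd>(1 - 2x)\<close> at 0.\<close>

definition sqrt_coeff :: "nat \<Rightarrow> complex" where
  "sqrt_coeff i = ((1/2) gchoose i) * (-2)^i"

definition sqrt_taylor :: "nat \<Rightarrow> complex \<Rightarrow> complex" where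
  "sqrt_taylor k x = (\<Sum>i\<le>k. sqrt_coeff i * x^i)"

lemma sqrt_coeff_0: "sqrt_coeff 0 = 1"
  by (simp add: sqrt_coeff_def)

lemma sqrt_coeff_convolution:
  "(\<Sum>i\<le>n. sqrt_coeff i * sqrt_coeff (n - i)) = (if n = 0 then 1 else if n = 1 then -2 else 0)"
proof -
  have "(\<Sum>i\<le>n. sqrt_coeff i * sqrt_coeff (n - i))
      = (-2)^n * (\<Sum>i=0..n. ((1/2) gchoose i) * ((1/2) gchoose (n - i)))"
    unfolding sqrt_coeff_def sum_distrib_left atLeast0AtMost[symmetric]
    by (rule sum.cong) (auto simp: power_add[symmetric] algebra_simps)
  also have "(\<Sum>i=0..n. ((1/2::complex) gchoose i) * ((1/2) gchoose (n - i))) = 1 gchoose n"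
    using gbinomial_Vandermonde[of "1/2::complex" "1/2" n] by simp
  also have "(1::complex) gchoose n = of_nat (1 choose n)"
    by (metis binomial_gbinomial of_nat_1)
  finally show ?thesis
    by (cases n) (auto simp: binomial_eq_0)
qed

lemma sqrt_coeff_nonzero: "sqrt_coeff k \<noteq> 0"
proof -
  have "pochhammer (- (1/2::complex)) k \<noteq> 0"
  proof
    assume "pochhammer (- (1/2::complex)) k = 0"
    then obtain j where "- (1/2::complex) = - of_nat j" by (auto simp: pochhammer_eq_0_iff)
    then have "(1::complex) = 2 * of_nat j" by (simp add: field_simps)
    then have "(1::nat) = 2 * j" by (metis of_nat_1 of_nat_mult of_nat_numeral of_nat_eq_iff)
    then show False by presburger
  qed
  then show ?thesis unfolding sqrt_coeff_def gbinomial_pochhammer by simp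
qed

lemma sqrt_taylor_squared:
  "sqrt_taylor k x ^ 2 = 1 - 2 * x + (if k = 0 then 2 * x else 0)
     + (\<Sum>(i,j)\<in>{..k} \<times> {..k} - {(i,j). i + j \<le> k}. sqrt_coeff i * sqrt_coeff j * x^(i+j))"
proof -
  let ?g = "\<lambda>i j. sqrt_coeff i * sqrt_coeff j * x^(i+j)"
  define A where "A = {..k} \<times> {..k}"
  define A1 where "A1 = {(i,j). i + j \<le> k}"
  have A1A: "A1 \<subseteq> A" and finA: "finite A" unfolding A_def A1_def by auto
  have "sqrt_taylor k x ^ 2 = (\<Sum>(i,j)\<in>A. ?g i j)"
    unfolding sqrt_taylor_def power2_eq_square sum_product A_def sum.cartesian_product
    by (rule sum.cong) (auto simp: power_add algebra_simps)
  also have "\<dots> = (\<Sum>(i,j)\<in>A1. ?g i j) + (\<Sum>(i,j)\<in>A - A1. ?g i j)"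
    using sum.subset_diff[OF A1A finA, of "\<lambda>(i,j). ?g i j"] by simp
  also have "(\<Sum>(i,j)\<in>A1. ?g i j) = (\<Sum>n\<le>k. \<Sum>i\<le>n. ?g i (n - i))"
    unfolding A1_def by (rule sum.triangle_reindex_eq)
  also have "\<dots> = (\<Sum>n\<le>k. x^n * (\<Sum>i\<le>n. sqrt_coeff i * sqrt_coeff (n - i)))"
    by (rule sum.cong[OF refl]) (auto simp: sum_distrib_left algebra_simps intro!: sum.cong)
  also have "\<dots> = (\<Sum>n\<le>k. (if n = 0 then 1 else 0) + (if n = 1 then -2 * x else 0))"
    by (rule sum.cong[OF refl]) (simp add: sqrt_coeff_convolution)
  also have "\<dots> = 1 - 2 * x + (if k = 0 then 2 * x else 0)"
    by (simp add: sum.distrib sum.delta)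
  finally show ?thesis by (simp add: A_def A1_def)
qed

lemma norm_sqrt_taylor_squared_sub_le:
  assumes "norm x \<le> 1"
  shows "norm (sqrt_taylor k x ^ 2 - (1 - 2*x)) \<le> ((\<Sum>i\<le>k. norm (sqrt_coeff i))^2 + 2) * norm x ^ (k+1)"
proof -
  define D where "D = {..k} \<times> {..k} - {(i,j). i + j \<le> k}"
  have "norm (\<Sum>(i,j)\<in>D. sqrt_coeff i * sqrt_coeff j * x^(i+j))
      \<le> (\<Sum>(i,j)\<in>D. norm (sqrt_coeff i) * norm (sqrt_coeff j) * norm x ^ (k+1))"
  proof (rule sum_norm_le)
    fix p assume p: "p \<in> D"
    obtain i j where ij: "p = (i,j)" by force
    have "k + 1 \<le> i + j" using p ij unfolding D_def by auto
    then have "norm x ^ (i+j) \<le> norm x ^ (k+1)" by (rule power_decreasing) (use assms in auto)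
    then show "norm (case p of (i,j) \<Rightarrow> sqrt_coeff i * sqrt_coeff j * x^(i+j))
        \<le> (case p of (i,j) \<Rightarrow> norm (sqrt_coeff i) * norm (sqrt_coeff j) * norm x ^ (k+1))"
      unfolding ij by (simp add: norm_mult norm_power mult_left_mono)
  qed
  also have "\<dots> \<le> (\<Sum>(i,j)\<in>{..k} \<times> {..k}. norm (sqrt_coeff i) * norm (sqrt_coeff j) * norm x ^ (k+1))"
    by (rule sum_mono2) (auto simp: D_def)
  also have "\<dots> = (\<Sum>i\<le>k. norm (sqrt_coeff i))^2 * norm x ^ (k+1)"
    unfolding sum.cartesian_product[symmetric] power2_eq_square sum_product sum_distrib_right
    by (simp add: sum_distrib_left sum_distrib_right algebra_simps)
  finally have tail: "norm (\<Sum>(i,j)\<in>D. sqrt_coeff i * sqrt_coeff j * x^(i+j))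
      \<le> (\<Sum>i\<le>k. norm (sqrt_coeff i))^2 * norm x ^ (k+1)" .
  have "norm (if k = 0 then 2 * x else 0) \<le> 2 * norm x ^ (k+1)"
    by (simp add: norm_mult)
  with tail show ?thesis
    unfolding sqrt_taylor_squared D_def[symmetric]
    using norm_triangle_ineq[of "if k = 0 then 2 * x else 0" "\<Sum>(i,j)\<in>D. sqrt_coeff i * sqrt_coeff j * x^(i+j)"]
    by (simp add: algebra_simps)
qed

lemma norm_sqrt_taylor_sub_1_le:
  assumes "norm x \<le> 1"
  shows "norm (sqrt_taylor k x - 1) \<le> (\<Sum>i\<le>k. norm (sqrt_coeff i)) * norm x"
proof -
  have "(\<Sum>i\<le>k. sqrt_coeff i * 0^i) = (\<Sum>i\<le>k. if i = 0 then sqrt_coeff i else 0)"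
    by (rule sum.cong) (auto simp: power_0_left)
  then have T0: "(\<Sum>i\<le>k. sqrt_coeff i * 0^i) = 1" by (simp add: sqrt_coeff_0)
  have "sqrt_taylor k x - 1 = (\<Sum>i\<le>k. sqrt_coeff i * (x^i - 0^i))"
    unfolding T0[symmetric] sqrt_taylor_def by (simp add: sum_subtractf right_diff_distrib)
  also have "norm \<dots> \<le> (\<Sum>i\<le>k. norm (sqrt_coeff i) * norm x)"
  proof (rule sum_norm_le)
    fix i
    have "norm (x^i - 0^i) \<le> norm x"
    proof (cases i)
      case (Suc j)
      have "norm x ^ Suc j \<le> norm x ^ 1" by (rule power_decreasing) (use assms in auto)
      then show ?thesis using Suc by (simp add: norm_power del: power_Suc)
    qed simp
    then show "norm (sqrt_coeff i * (x^i - 0^i)) \<le> norm (sqrt_coeff i) * norm x"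
      by (simp add: norm_mult mult_left_mono)
  qed
  finally show ?thesis by (simp add: sum_distrib_right)
qed

lemma norm_sqrt_sub_sqrt_taylor_le:
  fixes k :: nat and h x :: complex
  defines "A \<equiv> \<Sum>i\<le>k. norm (sqrt_coeff i)"
  assumes "h^2 = 1 - 2*x" "norm (h - 1) \<le> 1/2" "norm x \<le> 1/(2*A + 2)"
  shows "norm (h - sqrt_taylor k x) \<le> (A^2 + 2) * norm x ^ (k+1)"
proof -
  have A: "A \<ge> 1"
    unfolding A_def using sum_mono2[of "{..k}" "{0}" "\<lambda>i. norm (sqrt_coeff i)"] by (simp add: sqrt_coeff_0)
  have "1/(2*A + 2) \<le> 1" using A by simp
  then have x: "norm x \<le> 1" using assms(4) by linarith
  have "A * norm x \<le> A * (1/(2*A + 2))" using assms(4) A by (intro mult_left_mono) auto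
  also have "\<dots> \<le> 1/2" using A by (simp add: field_simps)
  finally have "norm (sqrt_taylor k x - 1) \<le> 1/2"
    using norm_sqrt_taylor_sub_1_le[OF x, of k] unfolding A_def by linarith
  then have "2 \<le> norm (h + sqrt_taylor k x) + 1"
    using norm_triangle_ineq4[of "h + sqrt_taylor k x" "(h - 1) + (sqrt_taylor k x - 1)"]
      norm_triangle_ineq[of "h - 1" "sqrt_taylor k x - 1"] assms(3) by simp
  then have sum: "norm (h + sqrt_taylor k x) \<ge> 1" by simp
  then have "h + sqrt_taylor k x \<noteq> 0" by auto
  then have "h - sqrt_taylor k x = - (sqrt_taylor k x ^ 2 - (1 - 2*x)) / (h + sqrt_taylor k x)"
    using assms(2) by (simp add: field_simps power2_eq_square)
  then have "norm (h - sqrt_taylor k x) = norm (sqrt_taylor k x ^ 2 - (1 - 2*x)) / norm (h + sqrt_taylor k x)"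
    by (simp only: norm_divide norm_minus_cancel)
  also have "\<dots> \<le> norm (sqrt_taylor k x ^ 2 - (1 - 2*x))"
    using sum by (simp add: divide_le_eq mult_le_cancel_left1 order.trans[OF _ mult_left_mono[OF sum]])
  also have "\<dots> \<le> (A^2 + 2) * norm x ^ (k+1)"
    unfolding A_def by (rule norm_sqrt_taylor_squared_sub_le[OF x])
  finally show ?thesis .
qed

section \<open>Polynomials with continuous coefficients\<close>

lemma sum_fun_apply: "(\<Sum>i\<in>A. f i) x = (\<Sum>i\<in>A. f i x)"
  by (induction A rule: infinite_finite_induct) auto

lemma power_fun_apply: "(f ^ n) x = f x ^ n"
  by (induction n) auto

text \<open>A polynomial \<open>F\<close> over the ring of functions \<open>real \<Rightarrow> complex\<close> stands for the function
  \<open>(\<beta>, t) \<mapsto> poly F (\<lambda>_. \<beta>) t\<close>, which is polynomial in \<open>\<beta>\<close> with coefficients depending on \<open>t\<close>.\<close>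

definition continuous_coeffs :: "(real \<Rightarrow> complex) poly \<Rightarrow> bool" where
  "continuous_coeffs F \<longleftrightarrow> (\<forall>i. continuous_on {0..1} (coeff F i))"

lemma continuous_coeffs_0: "continuous_coeffs 0"
  by (simp add: continuous_coeffs_def zero_fun_def)

lemma continuous_coeffs_pCons:
  "continuous_on {0..1} c \<Longrightarrow> continuous_coeffs F \<Longrightarrow> continuous_coeffs (pCons c F)"
  by (simp add: continuous_coeffs_def coeff_pCons split: nat.split)

lemma continuous_coeffs_add:
  "continuous_coeffs F \<Longrightarrow> continuous_coeffs G \<Longrightarrow> continuous_coeffs (F + G)"
  unfolding continuous_coeffs_def by (auto simp: plus_fun_def intro!: continuous_intros)

lemma continuous_coeffs_mult:
  assumes F: "continuous_coeffs F" and G: "continuous_coeffs G"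
  shows "continuous_coeffs (F * G)"
  unfolding continuous_coeffs_def coeff_mult sum_fun_apply[abs_def] times_fun_def
  using F G unfolding continuous_coeffs_def by (intro allI continuous_intros) auto

lemma continuous_coeffs_one: "continuous_coeffs 1"
  by (simp add: one_pCons one_fun_def continuous_coeffs_pCons continuous_coeffs_0)

lemma continuous_coeffs_power: "continuous_coeffs F \<Longrightarrow> continuous_coeffs (F ^ n)"
  by (induction n) (simp_all add: continuous_coeffs_one continuous_coeffs_mult)

lemma poly_const_fun_eq_sum:
  fixes F :: "(real \<Rightarrow> complex) poly"
  assumes "degree F \<le> n"
  shows "poly F (\<lambda>_. \<beta>) t = (\<Sum>i\<le>n. coeff F i t * \<beta> ^ i)"
proof -
  have "poly F (\<lambda>_. \<beta>) = (\<Sum>i\<le>degree F. coeff F i * (\<lambda>_. \<beta>) ^ i)" by (rule poly_altdef)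
  also have "\<dots> = (\<Sum>i\<le>n. coeff F i * (\<lambda>_. \<beta>) ^ i)"
    by (rule sum.mono_neutral_left) (use assms in \<open>auto simp: coeff_eq_0\<close>)
  finally show ?thesis by (simp add: sum_fun_apply power_fun_apply)
qed

definition integral_coeffs :: "(real \<Rightarrow> complex) poly \<Rightarrow> (real \<Rightarrow> complex) poly" where
  "integral_coeffs F = map_poly (\<lambda>c t. integral {0..t} c) F"

lemma coeff_integral_coeffs: "coeff (integral_coeffs F) i = (\<lambda>t. integral {0..t} (coeff F i))"
  unfolding integral_coeffs_def by (rule coeff_map_poly) (simp add: zero_fun_def)

lemma continuous_coeffs_integral_coeffs:
  "continuous_coeffs F \<Longrightarrow> continuous_coeffs (integral_coeffs F)"
  unfolding continuous_coeffs_def coeff_integral_coeffs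
  by (auto intro!: indefinite_integral_continuous_1 integrable_continuous_real)

lemma poly_integral_coeffs:
  assumes "continuous_coeffs F" "t \<in> {0..1}"
  shows "poly (integral_coeffs F) (\<lambda>_. \<beta>) t = integral {0..t} (\<lambda>s. poly F (\<lambda>_. \<beta>) s)"
proof -
  have deg: "degree (integral_coeffs F) \<le> degree F"
    by (rule degree_le) (simp add: coeff_integral_coeffs coeff_eq_0 zero_fun_def)
  have int: "(coeff F i) integrable_on {0..t}" for i
    using assms unfolding continuous_coeffs_def
    by (intro integrable_continuous_real) (auto intro: continuous_on_subset)
  then have "poly (integral_coeffs F) (\<lambda>_. \<beta>) t = (\<Sum>i\<le>degree F. integral {0..t} (\<lambda>s. coeff F i s * \<beta> ^ i))"
    by (simp add: poly_const_fun_eq_sum[OF deg] coeff_integral_coeffs integral_mult_left)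
  also have "\<dots> = integral {0..t} (\<lambda>s. \<Sum>i\<le>degree F. coeff F i s * \<beta> ^ i)"
    by (rule integral_sum[symmetric]) (auto intro: integrable_on_mult_left int)
  finally show ?thesis by (simp add: poly_const_fun_eq_sum[OF order_refl])
qed

section \<open>Solutions of the Abel equation by Picard iteration\<close>

locale abel_ode =
  fixes pt qt :: "real \<Rightarrow> complex" and Mp Mq :: real
  assumes continuous_pt: "continuous_on {0..1} pt" and continuous_qt: "continuous_on {0..1} qt"
    and norm_pt_le: "\<And>s. s \<in> {0..1} \<Longrightarrow> norm (pt s) \<le> Mp"
    and norm_qt_le: "\<And>s. s \<in> {0..1} \<Longrightarrow> norm (qt s) \<le> Mq"
    and Mp_ge_1: "Mp \<ge> 1" and Mq_ge_1: "Mq \<ge> 1"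
begin

definition rhs :: "complex \<Rightarrow> complex \<Rightarrow> real \<Rightarrow> complex \<Rightarrow> complex" where
  "rhs \<alpha> \<beta> s z = \<alpha> * pt s * z^3 + \<beta> * qt s * z^2"

text \<open>The factors \<open>27/8\<close> and \<open>9/4\<close> bound \<open>\<bar>z\<bar>\<^sup>3\<close> and \<open>\<bar>z\<bar>\<^sup>2\<close> when \<open>\<bar>z - 1\<bar> \<le> 1/2\<close>.\<close>

definition rhs_bound :: "complex \<Rightarrow> complex \<Rightarrow> real" where
  "rhs_bound \<alpha> \<beta> = norm \<alpha> * Mp * (27/8) + norm \<beta> * Mq * (9/4)"

definition small_params :: "complex \<Rightarrow> complex \<Rightarrow> bool" where
  "small_params \<alpha> \<beta> \<longleftrightarrow> norm \<alpha> \<le> 1/(27*Mp) \<and> norm \<beta> \<le> 1/(12*Mq)"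

definition near_one :: "(real \<Rightarrow> complex) \<Rightarrow> bool" where
  "near_one y \<longleftrightarrow> continuous_on {0..1} y \<and> (\<forall>t\<in>{0..1}. norm (y t - 1) \<le> 1/2)"

definition picard :: "complex \<Rightarrow> complex \<Rightarrow> (real \<Rightarrow> complex) \<Rightarrow> real \<Rightarrow> complex" where
  "picard \<alpha> \<beta> y = (\<lambda>t. 1 + integral {0..t} (\<lambda>s. rhs \<alpha> \<beta> s (y s)))"

primrec picard_iter :: "complex \<Rightarrow> complex \<Rightarrow> nat \<Rightarrow> real \<Rightarrow> complex" where
  "picard_iter \<alpha> \<beta> 0 = (\<lambda>t. 1)"
| "picard_iter \<alpha> \<beta> (Suc n) = picard \<alpha> \<beta> (picard_iter \<alpha> \<beta> n)"

text \<open>For small parameters the Picard operator maps functions within 1/2 of 1 into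
  themselves and contracts by the factor 1/2, so the iterates converge to the solution
  of \<open>w' = \<alpha> pt w\<^sup>3 + \<beta> qt w\<^sup>2\<close>, \<open>w 0 = 1\<close>.  Outside \<open>small_params\<close> the
  limit below is a junk value.\<close>

definition sol :: "complex \<Rightarrow> complex \<Rightarrow> real \<Rightarrow> complex" where
  "sol \<alpha> \<beta> t = lim (\<lambda>n. picard_iter \<alpha> \<beta> n t)"

lemma norm_le_three_halves: "norm (z - 1) \<le> 1/2 \<Longrightarrow> norm (z::complex) \<le> 3/2"
  using norm_triangle_ineq[of "z - 1" 1] by simp

lemma rhs_bound_nonneg: "rhs_bound \<alpha> \<beta> \<ge> 0"
  unfolding rhs_bound_def using Mp_ge_1 Mq_ge_1 by simp

lemma rhs_diff_params: "rhs \<alpha> \<beta> s z - rhs \<alpha>' \<beta>' s z = rhs (\<alpha> - \<alpha>') (\<beta> - \<beta>') s z"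
  by (simp add: rhs_def algebra_simps)

lemma norm_rhs_le:
  assumes "norm (z - 1) \<le> 1/2" "s \<in> {0..1}"
  shows "norm (rhs \<alpha> \<beta> s z) \<le> rhs_bound \<alpha> \<beta>"
proof -
  have z: "norm z \<le> 3/2" using norm_le_three_halves assms(1) .
  have "norm z ^ 3 \<le> (3/2)^3" by (intro power_mono z norm_ge_zero)
  also have "(3/2::real)^3 = 27/8" by (simp add: power3_eq_cube)
  finally have "norm (z^3) \<le> 27/8" by (simp only: norm_power)
  then have 1: "norm (\<alpha> * pt s * z^3) \<le> norm \<alpha> * Mp * (27/8)"
    unfolding norm_mult using norm_pt_le[OF assms(2)] Mp_ge_1 by (intro mult_mono) (auto intro: mult_left_mono)
  have "norm z ^ 2 \<le> (3/2)^2" by (intro power_mono z norm_ge_zero)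
  also have "(3/2::real)^2 = 9/4" by (simp add: power2_eq_square)
  finally have "norm (z^2) \<le> 9/4" by (simp only: norm_power)
  then have 2: "norm (\<beta> * qt s * z^2) \<le> norm \<beta> * Mq * (9/4)"
    unfolding norm_mult using norm_qt_le[OF assms(2)] Mq_ge_1 by (intro mult_mono) (auto intro: mult_left_mono)
  show ?thesis unfolding rhs_def rhs_bound_def
    using norm_triangle_ineq[of "\<alpha> * pt s * z^3" "\<beta> * qt s * z^2"] 1 2 by linarith
qed

lemma small_params_norms:
  assumes "small_params \<alpha> \<beta>"
  shows "norm \<alpha> * Mp \<le> 1/27" "norm \<beta> * Mq \<le> 1/12"
  using assms Mp_ge_1 Mq_ge_1 unfolding small_params_def by (simp_all add: field_simps)

lemma norm_rhs_le_half:
  assumes "small_params \<alpha> \<beta>" "norm (z - 1) \<le> 1/2" "s \<in> {0..1}"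
  shows "norm (rhs \<alpha> \<beta> s z) \<le> 1/2"
  using norm_rhs_le[OF assms(2,3), of \<alpha> \<beta>] small_params_norms[OF assms(1)]
  unfolding rhs_bound_def by linarith

lemma rhs_lipschitz:
  assumes "small_params \<alpha> \<beta>" "norm (z - 1) \<le> 1/2" "norm (z' - 1) \<le> 1/2" "s \<in> {0..1}"
  shows "norm (rhs \<alpha> \<beta> s z - rhs \<alpha> \<beta> s z') \<le> 1/2 * norm (z - z')"
proof -
  have z: "norm z \<le> 3/2" and z': "norm z' \<le> 3/2" using norm_le_three_halves assms(2,3) by auto
  define c where "c = \<alpha> * pt s * (z^2 + z*z' + z'^2) + \<beta> * qt s * (z + z')"
  have eq: "rhs \<alpha> \<beta> s z - rhs \<alpha> \<beta> s z' = (z - z') * c"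
    unfolding rhs_def c_def by (simp add: algebra_simps power2_eq_square power3_eq_cube)
  have "norm (z^2 + z*z' + z'^2) \<le> norm z * norm z + norm z * norm z' + norm z' * norm z'"
    by (metis norm_mult norm_triangle_le norm_triangle_ineq power2_eq_square add_mono order_refl)
  also have "\<dots> \<le> (3/2)*(3/2) + (3/2)*(3/2) + (3/2)*(3/2)"
    using z z' by (intro add_mono mult_mono) auto
  finally have "norm (\<alpha> * pt s * (z^2 + z*z' + z'^2)) \<le> (norm \<alpha> * Mp) * (27/4)"
    unfolding norm_mult using norm_pt_le[OF assms(4)] Mp_ge_1
    by (intro mult_mono) (auto intro: mult_left_mono)
  moreover have "norm (\<beta> * qt s * (z + z')) \<le> (norm \<beta> * Mq) * 3"
    unfolding norm_mult using norm_qt_le[OF assms(4)] z z' norm_triangle_ineq[of z z'] Mq_ge_1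
    by (intro mult_mono) (auto intro: mult_left_mono)
  ultimately have "norm c \<le> 1/2"
    using small_params_norms[OF assms(1)] norm_triangle_ineq[of "\<alpha> * pt s * (z^2 + z*z' + z'^2)" "\<beta> * qt s * (z + z')"]
    unfolding c_def by linarith
  then have "norm c * norm (z - z') \<le> 1/2 * norm (z - z')" by (rule mult_right_mono) simp
  then show ?thesis unfolding eq norm_mult by (simp add: mult.commute)
qed

lemma continuous_on_rhs:
  "continuous_on {0..1} y \<Longrightarrow> continuous_on {0..1} (\<lambda>s. rhs \<alpha> \<beta> s (y s))"
  unfolding rhs_def using continuous_pt continuous_qt by (intro continuous_intros) auto

lemma continuous_on_picard: "continuous_on {0..1} y \<Longrightarrow> continuous_on {0..1} (picard \<alpha> \<beta> y)"
  unfolding picard_def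
  by (intro continuous_intros indefinite_integral_continuous_1 integrable_continuous_real continuous_on_rhs)

lemma picard_at_0: "picard \<alpha> \<beta> y 0 = 1"
  unfolding picard_def by simp

lemma picard_diff:
  assumes "continuous_on {0..1} y" "continuous_on {0..1} z" "t \<in> {0..1}"
  shows "picard \<alpha> \<beta> y t - picard \<alpha>' \<beta>' z t = integral {0..t} (\<lambda>s. rhs \<alpha> \<beta> s (y s) - rhs \<alpha>' \<beta>' s (z s))"
  unfolding picard_def using assms
  by (simp add: integral_diff integrable_continuous_real continuous_on_subset[OF continuous_on_rhs])

lemma picard_near_one:
  assumes "small_params \<alpha> \<beta>" "near_one y"
  shows "near_one (picard \<alpha> \<beta> y)"
  unfolding near_one_def
proof safe
  show "continuous_on {0..1} (picard \<alpha> \<beta> y)" using assms(2) continuous_on_picard near_one_def by blast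
  fix t :: real assume t: "t \<in> {0..1}"
  have "norm (integral {0..t} (\<lambda>s. rhs \<alpha> \<beta> s (y s))) \<le> 1/2"
    by (rule norm_integral_le_unit_interval[OF continuous_on_rhs t])
       (use assms norm_rhs_le_half near_one_def in auto)
  then show "norm (picard \<alpha> \<beta> y t - 1) \<le> 1/2" unfolding picard_def by simp
qed

lemma picard_contraction:
  assumes "small_params \<alpha> \<beta>" "near_one y" "near_one z" "t \<in> {0..1}"
    and "\<And>s. s \<in> {0..1} \<Longrightarrow> norm (y s - z s) \<le> d"
  shows "norm (picard \<alpha> \<beta> y t - picard \<alpha> \<beta> z t) \<le> d/2"
proof -
  have y: "continuous_on {0..1} y" and z: "continuous_on {0..1} z" using assms near_one_def by auto
  have "norm (integral {0..t} (\<lambda>s. rhs \<alpha> \<beta> s (y s) - rhs \<alpha> \<beta> s (z s))) \<le> d/2"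
  proof (rule norm_integral_le_unit_interval[OF _ assms(4)])
    show "continuous_on {0..1} (\<lambda>s. rhs \<alpha> \<beta> s (y s) - rhs \<alpha> \<beta> s (z s))"
      by (intro continuous_intros continuous_on_rhs y z)
    fix s :: real assume s: "s \<in> {0..1}"
    have "norm (rhs \<alpha> \<beta> s (y s) - rhs \<alpha> \<beta> s (z s)) \<le> 1/2 * norm (y s - z s)"
      by (rule rhs_lipschitz) (use assms s near_one_def in auto)
    then show "norm (rhs \<alpha> \<beta> s (y s) - rhs \<alpha> \<beta> s (z s)) \<le> d/2" using assms(5)[OF s] by simp
  qed
  then show ?thesis by (simp add: picard_diff[OF y z assms(4)])
qed

lemma picard_param_diff:
  assumes "near_one y" "t \<in> {0..1}"
  shows "norm (picard \<alpha> \<beta> y t - picard \<alpha>' \<beta>' y t) \<le> rhs_bound (\<alpha> - \<alpha>') (\<beta> - \<beta>')"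
proof -
  have y: "continuous_on {0..1} y" using assms near_one_def by auto
  have "norm (integral {0..t} (\<lambda>s. rhs (\<alpha> - \<alpha>') (\<beta> - \<beta>') s (y s))) \<le> rhs_bound (\<alpha> - \<alpha>') (\<beta> - \<beta>')"
    by (rule norm_integral_le_unit_interval[OF continuous_on_rhs[OF y] assms(2)])
       (use assms near_one_def norm_rhs_le in auto)
  then show ?thesis by (simp add: picard_diff[OF y y assms(2)] rhs_diff_params)
qed

lemma picard_iter_near_one:
  assumes "small_params \<alpha> \<beta>"
  shows "near_one (picard_iter \<alpha> \<beta> n)"
proof (induction n)
  case 0
  show ?case by (simp add: near_one_def)
next
  case (Suc n)
  then show ?case by (simp add: picard_near_one[OF assms])
qed

lemma picard_iter_at_0: "picard_iter \<alpha> \<beta> n 0 = 1"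
  by (cases n) (simp_all add: picard_at_0)

lemma picard_iter_step:
  assumes "small_params \<alpha> \<beta>" "t \<in> {0..1}"
  shows "norm (picard_iter \<alpha> \<beta> (Suc n) t - picard_iter \<alpha> \<beta> n t) \<le> (1/2)^(Suc n)"
  using assms(2)
proof (induction n arbitrary: t)
  case 0
  then show ?case using picard_iter_near_one[OF assms(1), of 1] by (simp add: near_one_def)
next
  case (Suc n)
  show ?case
    using picard_contraction[OF assms(1) picard_iter_near_one[OF assms(1)]
        picard_iter_near_one[OF assms(1)] Suc.prems Suc.IH]
    by simp
qed

lemma picard_iter_dist:
  assumes "small_params \<alpha> \<beta>" "t \<in> {0..1}"
  shows "norm (picard_iter \<alpha> \<beta> m t - picard_iter \<alpha> \<beta> n t) \<le> (1/2)^(min m n)"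
proof -
  have *: "norm (picard_iter \<alpha> \<beta> m t - picard_iter \<alpha> \<beta> n t) \<le> (1/2)^n - (1/2)^m" if "n \<le> m" for m n
    using that
  proof (induction m rule: dec_induct)
    case (step m)
    then show ?case
      using picard_iter_step[OF assms, of m]
        norm_triangle_ineq[of "picard_iter \<alpha> \<beta> (Suc m) t - picard_iter \<alpha> \<beta> m t"
          "picard_iter \<alpha> \<beta> m t - picard_iter \<alpha> \<beta> n t"]
      by simp
  qed simp
  show ?thesis
  proof (cases "n \<le> m")
    case True
    have "(0::real) \<le> (1/2)^m" by simp
    then show ?thesis unfolding min_absorb2[OF True] using *[OF True] by linarith
  next
    case False
    then have "m \<le> n" by simp
    have "(0::real) \<le> (1/2)^n" by simp
    then show ?thesis
      unfolding min_absorb1[OF \<open>m \<le> n\<close>]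
      using *[OF \<open>m \<le> n\<close>] norm_minus_commute[of "picard_iter \<alpha> \<beta> m t" "picard_iter \<alpha> \<beta> n t"]
      by linarith
  qed
qed

lemma picard_iter_tendsto_sol:
  assumes "small_params \<alpha> \<beta>" "t \<in> {0..1}"
  shows "(\<lambda>n. picard_iter \<alpha> \<beta> n t) \<longlonglongrightarrow> sol \<alpha> \<beta> t"
proof -
  have "Cauchy (\<lambda>n. picard_iter \<alpha> \<beta> n t)"
  proof (rule metric_CauchyI)
    fix e :: real assume "0 < e"
    then obtain N where N: "(1/2::real)^N < e" using real_arch_pow_inv[of e "1/2"] by auto
    have "dist (picard_iter \<alpha> \<beta> m t) (picard_iter \<alpha> \<beta> n t) < e" if "N \<le> m" "N \<le> n" for m n
    proof -
      have "(1/2::real)^(min m n) \<le> (1/2)^N" using that by (intro power_decreasing) auto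
      then show ?thesis unfolding dist_norm using picard_iter_dist[OF assms, of m n] N by linarith
    qed
    then show "\<exists>M. \<forall>m\<ge>M. \<forall>n\<ge>M. dist (picard_iter \<alpha> \<beta> m t) (picard_iter \<alpha> \<beta> n t) < e" by blast
  qed
  then show ?thesis unfolding sol_def using Cauchy_convergent convergent_LIMSEQ_iff by blast
qed

lemma norm_sol_minus_picard_iter:
  assumes "small_params \<alpha> \<beta>" "t \<in> {0..1}"
  shows "norm (sol \<alpha> \<beta> t - picard_iter \<alpha> \<beta> n t) \<le> (1/2)^n"
proof (rule Lim_bounded)
  show "(\<lambda>m. norm (picard_iter \<alpha> \<beta> m t - picard_iter \<alpha> \<beta> n t)) \<longlonglongrightarrow> norm (sol \<alpha> \<beta> t - picard_iter \<alpha> \<beta> n t)"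
    by (intro tendsto_intros picard_iter_tendsto_sol[OF assms])
  show "\<forall>m\<ge>n. norm (picard_iter \<alpha> \<beta> m t - picard_iter \<alpha> \<beta> n t) \<le> (1/2)^n"
    using picard_iter_dist[OF assms] by (metis min.absorb2)
qed

lemma uniform_limit_picard_iter:
  "small_params \<alpha> \<beta> \<Longrightarrow> uniform_limit {0..1} (picard_iter \<alpha> \<beta>) (sol \<alpha> \<beta>) sequentially"
  by (rule uniform_limit_of_geometric_bound) (use norm_sol_minus_picard_iter in \<open>auto simp: norm_minus_commute\<close>)

lemma sol_near_one:
  assumes "small_params \<alpha> \<beta>"
  shows "near_one (sol \<alpha> \<beta>)"
  unfolding near_one_def
proof safe
  show "continuous_on {0..1} (sol \<alpha> \<beta>)"
    by (rule uniform_limit_theorem[OF _ uniform_limit_picard_iter[OF assms]])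
       (use picard_iter_near_one[OF assms] near_one_def in auto)
  fix t :: real assume t: "t \<in> {0..1}"
  show "norm (sol \<alpha> \<beta> t - 1) \<le> 1/2"
  proof (rule Lim_bounded)
    show "(\<lambda>n. norm (picard_iter \<alpha> \<beta> n t - 1)) \<longlonglongrightarrow> norm (sol \<alpha> \<beta> t - 1)"
      by (intro tendsto_intros picard_iter_tendsto_sol[OF assms t])
    show "\<forall>n\<ge>0. norm (picard_iter \<alpha> \<beta> n t - 1) \<le> 1/2"
      using picard_iter_near_one[OF assms] t near_one_def by auto
  qed
qed

lemma continuous_on_sol: "small_params \<alpha> \<beta> \<Longrightarrow> continuous_on {0..1} (sol \<alpha> \<beta>)"
  using sol_near_one near_one_def by blast

lemma sol_fixed_point:
  assumes "small_params \<alpha> \<beta>" "t \<in> {0..1}"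
  shows "picard \<alpha> \<beta> (sol \<alpha> \<beta>) t = sol \<alpha> \<beta> t"
proof -
  have "norm (picard \<alpha> \<beta> (sol \<alpha> \<beta>) t - sol \<alpha> \<beta> t) \<le> 0 + (1/2)^n" for n
  proof -
    have "norm (picard \<alpha> \<beta> (sol \<alpha> \<beta>) t - picard_iter \<alpha> \<beta> (Suc n) t) \<le> (1/2)^n/2"
      using picard_contraction[OF assms(1) sol_near_one[OF assms(1)] picard_iter_near_one[OF assms(1)] assms(2)]
        norm_sol_minus_picard_iter[OF assms(1)] by simp
    moreover have "norm (picard_iter \<alpha> \<beta> (Suc n) t - sol \<alpha> \<beta> t) \<le> (1/2)^(Suc n)"
      using norm_sol_minus_picard_iter[OF assms, of "Suc n"] by (simp add: norm_minus_commute)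
    ultimately show ?thesis
      using norm_triangle_ineq[of "picard \<alpha> \<beta> (sol \<alpha> \<beta>) t - picard_iter \<alpha> \<beta> (Suc n) t"
          "picard_iter \<alpha> \<beta> (Suc n) t - sol \<alpha> \<beta> t"]
      by simp
  qed
  then show ?thesis using le_of_le_add_half_power[of "norm (picard \<alpha> \<beta> (sol \<alpha> \<beta>) t - sol \<alpha> \<beta> t)" 0] by simp
qed

lemma sol_at_0: "small_params \<alpha> \<beta> \<Longrightarrow> sol \<alpha> \<beta> 0 = 1"
  using picard_iter_tendsto_sol[of \<alpha> \<beta> 0] by (simp add: picard_iter_at_0 LIMSEQ_const_iff)

lemma sol_has_vector_derivative:
  assumes "small_params \<alpha> \<beta>" "t \<in> {0..1}"
  shows "(sol \<alpha> \<beta> has_vector_derivative rhs \<alpha> \<beta> t (sol \<alpha> \<beta> t)) (at t within {0..1})"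
proof -
  have "((\<lambda>t. 1 + integral {0..t} (\<lambda>s. rhs \<alpha> \<beta> s (sol \<alpha> \<beta> s))) has_vector_derivative
      0 + rhs \<alpha> \<beta> t (sol \<alpha> \<beta> t)) (at t within {0..1})"
    by (intro derivative_intros integral_has_vector_derivative continuous_on_rhs continuous_on_sol assms)
  then have "(picard \<alpha> \<beta> (sol \<alpha> \<beta>) has_vector_derivative rhs \<alpha> \<beta> t (sol \<alpha> \<beta> t)) (at t within {0..1})"
    unfolding picard_def by simp
  then show ?thesis
    by (rule has_vector_derivative_transform[OF assms(2), rotated]) (use sol_fixed_point[OF assms(1)] in auto)
qed

lemma norm_fixed_points_diff_le:
  assumes "small_params \<alpha> \<beta>" "near_one y" "near_one z"
    and "\<And>t. t \<in> {0..1} \<Longrightarrow> picard \<alpha> \<beta> y t = y t" "\<And>t. t \<in> {0..1} \<Longrightarrow> picard \<alpha>' \<beta>' z t = z t"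
    and "t \<in> {0..1}"
  shows "norm (y t - z t) \<le> 2 * rhs_bound (\<alpha> - \<alpha>') (\<beta> - \<beta>')"
proof -
  define e where "e = rhs_bound (\<alpha> - \<alpha>') (\<beta> - \<beta>')"
  have "\<forall>t\<in>{0..1}. norm (y t - z t) \<le> 2 * e + (1/2)^k" for k
  proof (induction k)
    case 0
    have "norm (y t - z t) \<le> 1" if "t \<in> {0..1}" for t
      using assms(2,3) that norm_triangle_ineq4[of "y t - 1" "z t - 1"] unfolding near_one_def by force
    then show ?case using rhs_bound_nonneg[of "\<alpha> - \<alpha>'" "\<beta> - \<beta>'"] by (force simp: e_def)
  next
    case (Suc k)
    show ?case
    proof
      fix t :: real assume t: "t \<in> {0..1}"
      have "norm (picard \<alpha> \<beta> y t - picard \<alpha> \<beta> z t) \<le> (2 * e + (1/2)^k)/2"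
        by (rule picard_contraction[OF assms(1-3) t]) (use Suc.IH in auto)
      moreover have "norm (picard \<alpha> \<beta> z t - picard \<alpha>' \<beta>' z t) \<le> e"
        unfolding e_def by (rule picard_param_diff[OF assms(3) t])
      ultimately show "norm (y t - z t) \<le> 2 * e + (1/2)^Suc k"
        using assms(4,5)[OF t]
          norm_triangle_ineq[of "picard \<alpha> \<beta> y t - picard \<alpha> \<beta> z t" "picard \<alpha> \<beta> z t - picard \<alpha>' \<beta>' z t"]
        by simp
    qed
  qed
  then show ?thesis using assms(6) le_of_le_add_half_power unfolding e_def by blast
qed

lemma norm_sol_diff_le:
  assumes "small_params \<alpha> \<beta>" "small_params \<alpha>' \<beta>'" "t \<in> {0..1}"
  shows "norm (sol \<alpha> \<beta> t - sol \<alpha>' \<beta>' t) \<le> 2 * rhs_bound (\<alpha> - \<alpha>') (\<beta> - \<beta>')"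
  using norm_fixed_points_diff_le[OF assms(1) sol_near_one[OF assms(1)] sol_near_one[OF assms(2)]
      sol_fixed_point[OF assms(1)] sol_fixed_point[OF assms(2)] assms(3)] .

lemma picard_iter_poly:
  "\<exists>F. continuous_coeffs F \<and> (\<forall>\<beta>. \<forall>t\<in>{0..1}. picard_iter \<alpha> \<beta> n t = poly F (\<lambda>_. \<beta>) t)"
proof (induction n)
  case 0
  show ?case by (rule exI[of _ 1]) (simp add: continuous_coeffs_one)
next
  case (Suc n)
  then obtain F where F: "continuous_coeffs F" "\<And>\<beta> t. t \<in> {0..1} \<Longrightarrow> picard_iter \<alpha> \<beta> n t = poly F (\<lambda>_. \<beta>) t"
    by blast
  define G where "G = [:(\<lambda>s. \<alpha> * pt s):] * F^3 + [:0, qt:] * F^2"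
  have G: "continuous_coeffs G" unfolding G_def
    by (intro continuous_coeffs_add continuous_coeffs_mult continuous_coeffs_power continuous_coeffs_pCons
        continuous_coeffs_0 F(1) continuous_qt continuous_intros continuous_pt)
       (simp add: zero_fun_def)
  have "picard_iter \<alpha> \<beta> (Suc n) t = poly (1 + integral_coeffs G) (\<lambda>_. \<beta>) t" if t: "t \<in> {0..1}" for \<beta> t
  proof -
    have "integral {0..t} (\<lambda>s. rhs \<alpha> \<beta> s (picard_iter \<alpha> \<beta> n s)) = integral {0..t} (\<lambda>s. poly G (\<lambda>_. \<beta>) s)"
      by (rule integral_cong) (use t F(2) in \<open>auto simp: G_def rhs_def power_fun_apply algebra_simps\<close>)
    then show ?thesis by (simp add: picard_def poly_integral_coeffs[OF G t])
  qed
  then show ?case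
    by (intro exI[of _ "1 + integral_coeffs G"])
       (simp add: continuous_coeffs_add continuous_coeffs_one continuous_coeffs_integral_coeffs G)
qed

lemma picard_iter_holomorphic: "(\<lambda>\<beta>. picard_iter \<alpha> \<beta> n 1) holomorphic_on UNIV"
proof -
  obtain F where F: "\<And>\<beta> t. t \<in> {0..1} \<Longrightarrow> picard_iter \<alpha> \<beta> n t = poly F (\<lambda>_. \<beta>) t"
    using picard_iter_poly by blast
  have "(\<lambda>\<beta>. picard_iter \<alpha> \<beta> n 1) = (\<lambda>\<beta>. \<Sum>i\<le>degree F. coeff F i 1 * \<beta> ^ i)"
    by (simp add: F poly_const_fun_eq_sum[OF order_refl])
  then show ?thesis by (simp add: holomorphic_intros)
qed

lemma sol_holomorphic:
  assumes "norm \<alpha> \<le> 1/(27*Mp)"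
  shows "(\<lambda>\<beta>. sol \<alpha> \<beta> 1) holomorphic_on ball 0 (1/(12*Mq))"
proof (rule holomorphic_uniform_limit)
  show "uniform_limit (cball 0 (1/(12*Mq))) (\<lambda>n \<beta>. picard_iter \<alpha> \<beta> n 1) (\<lambda>\<beta>. sol \<alpha> \<beta> 1) sequentially"
    using assms norm_sol_minus_picard_iter[of \<alpha> _ 1]
    by (intro uniform_limit_of_geometric_bound) (simp add: small_params_def norm_minus_commute)
qed (auto intro!: always_eventually holomorphic_on_imp_continuous_on
       holomorphic_on_subset[OF picard_iter_holomorphic])

end

locale abel_ode_ends = abel_ode +
  fixes Pf Qf :: "real \<Rightarrow> complex"
  assumes Pf_has_vector_derivative: "\<And>s. s \<in> {0..1} \<Longrightarrow> (Pf has_vector_derivative pt s) (at s within {0..1})"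
    and Qf_has_vector_derivative: "\<And>s. s \<in> {0..1} \<Longrightarrow> (Qf has_vector_derivative qt s) (at s within {0..1})"
    and Pf_0: "Pf 0 = 0" and Pf_1: "Pf 1 = 0" and Qf_0: "Qf 0 = 0" and Qf_1: "Qf 1 = 0"
begin

lemma continuous_on_Pf: "continuous_on {0..1} Pf"
  unfolding continuous_on_eq_continuous_within
  using Pf_has_vector_derivative has_vector_derivative_continuous by blast

lemma continuous_on_Qf: "continuous_on {0..1} Qf"
  unfolding continuous_on_eq_continuous_within
  using Qf_has_vector_derivative has_vector_derivative_continuous by blast

lemma norm_sol_ge_half: "small_params \<alpha> \<beta> \<Longrightarrow> t \<in> {0..1} \<Longrightarrow> norm (sol \<alpha> \<beta> t) \<ge> 1/2"
  using sol_near_one[of \<alpha> \<beta>] norm_triangle_ineq2[of 1 "sol \<alpha> \<beta> t"]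
  unfolding near_one_def by (force simp: norm_minus_commute)

lemma sol_nonzero: "small_params \<alpha> \<beta> \<Longrightarrow> t \<in> {0..1} \<Longrightarrow> sol \<alpha> \<beta> t \<noteq> 0"
  using norm_sol_ge_half by force

lemma continuous_on_inverse_sol: "small_params \<alpha> \<beta> \<Longrightarrow> continuous_on {0..1} (\<lambda>s. inverse (sol \<alpha> \<beta> s))"
  by (intro continuous_intros continuous_on_sol) (auto dest: sol_nonzero)

lemma inverse_sol_has_vector_derivative:
  assumes "small_params \<alpha> \<beta>" "t \<in> {0..1}"
  shows "((\<lambda>s. inverse (sol \<alpha> \<beta> s)) has_vector_derivative - (\<alpha> * pt t * sol \<alpha> \<beta> t + \<beta> * qt t))
    (at t within {0..1})"
proof -
  have nz: "sol \<alpha> \<beta> t \<noteq> 0" by (rule sol_nonzero[OF assms])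
  have "((inverse \<circ> sol \<alpha> \<beta>) has_vector_derivative
      rhs \<alpha> \<beta> t (sol \<alpha> \<beta> t) * (- (inverse (sol \<alpha> \<beta> t) ^ Suc (Suc 0)))) (at t within {0..1})"
    by (rule field_vector_diff_chain_within[OF sol_has_vector_derivative[OF assms] DERIV_inverse[OF nz]])
  moreover have "rhs \<alpha> \<beta> t (sol \<alpha> \<beta> t) * (- (inverse (sol \<alpha> \<beta> t) ^ Suc (Suc 0)))
      = - (\<alpha> * pt t * sol \<alpha> \<beta> t + \<beta> * qt t)"
    using nz unfolding rhs_def by (simp add: field_simps power2_eq_square power3_eq_cube)
  ultimately show ?thesis by (simp add: o_def)
qed

lemma inverse_sol_eq:
  assumes "small_params \<alpha> \<beta>" "t \<in> {0..1}"
  shows "inverse (sol \<alpha> \<beta> t) = 1 - \<beta> * Qf t - \<alpha> * integral {0..t} (\<lambda>s. pt s * sol \<alpha> \<beta> s)"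
proof -
  have "((\<lambda>s. inverse (sol \<alpha> \<beta> s) + \<beta> * Qf s) has_vector_derivative - \<alpha> * (pt s * sol \<alpha> \<beta> s))
      (at s within {0..1})" if "s \<in> {0..1}" for s
    using has_vector_derivative_add[OF inverse_sol_has_vector_derivative[OF assms(1) that]
        has_vector_derivative_mult_right[OF Qf_has_vector_derivative[OF that], of \<beta>]]
    by (simp add: algebra_simps)
  from has_integral_of_vector_derivative_unit_interval[OF this assms(2)]
  have "integral {0..t} (\<lambda>s. - \<alpha> * (pt s * sol \<alpha> \<beta> s))
      = inverse (sol \<alpha> \<beta> t) + \<beta> * Qf t - (inverse (sol \<alpha> \<beta> 0) + \<beta> * Qf 0)"
    by (rule integral_unique)
  then show ?thesis using Qf_0 sol_at_0[OF assms(1)] by (simp add: integral_mult_right integral_neg algebra_simps)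
qed

lemma inverse_sol_squared_has_vector_derivative:
  assumes "small_params \<alpha> \<beta>" "t \<in> {0..1}"
  shows "((\<lambda>s. inverse (sol \<alpha> \<beta> s) ^ 2) has_vector_derivative
      - 2 * (\<alpha> * pt t + \<beta> * qt t * inverse (sol \<alpha> \<beta> t))) (at t within {0..1})"
proof -
  have nz: "sol \<alpha> \<beta> t \<noteq> 0" by (rule sol_nonzero[OF assms])
  have "inverse (sol \<alpha> \<beta> t) * - (\<alpha> * pt t * sol \<alpha> \<beta> t + \<beta> * qt t)
        + - (\<alpha> * pt t * sol \<alpha> \<beta> t + \<beta> * qt t) * inverse (sol \<alpha> \<beta> t)
      = - 2 * (\<alpha> * pt t + \<beta> * qt t * inverse (sol \<alpha> \<beta> t))"
    using nz by (simp add: field_simps)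
  then show ?thesis
    using has_vector_derivative_mult[OF inverse_sol_has_vector_derivative[OF assms]
        inverse_sol_has_vector_derivative[OF assms]]
    by (simp add: power2_eq_square)
qed

lemma inverse_sol_squared_eq:
  assumes "small_params \<alpha> \<beta>" "t \<in> {0..1}"
  shows "inverse (sol \<alpha> \<beta> t) ^ 2 = 1 - 2 * \<alpha> * Pf t - 2 * \<beta> * integral {0..t} (\<lambda>s. qt s * inverse (sol \<alpha> \<beta> s))"
proof -
  have "((\<lambda>s. inverse (sol \<alpha> \<beta> s) ^ 2 + 2 * \<alpha> * Pf s) has_vector_derivative
      - 2 * \<beta> * (qt s * inverse (sol \<alpha> \<beta> s))) (at s within {0..1})" if "s \<in> {0..1}" for s
    using has_vector_derivative_add[OF inverse_sol_squared_has_vector_derivative[OF assms(1) that]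
        has_vector_derivative_mult_right[OF Pf_has_vector_derivative[OF that], of "2 * \<alpha>"]]
    by (simp add: algebra_simps)
  from has_integral_of_vector_derivative_unit_interval[OF this assms(2)]
  have "integral {0..t} (\<lambda>s. - 2 * \<beta> * (qt s * inverse (sol \<alpha> \<beta> s)))
      = inverse (sol \<alpha> \<beta> t) ^ 2 + 2 * \<alpha> * Pf t - (inverse (sol \<alpha> \<beta> 0) ^ 2 + 2 * \<alpha> * Pf 0)"
    by (rule integral_unique)
  moreover have "integral {0..t} (\<lambda>s. - 2 * \<beta> * (qt s * inverse (sol \<alpha> \<beta> s)))
      = - 2 * \<beta> * integral {0..t} (\<lambda>s. qt s * inverse (sol \<alpha> \<beta> s))"
    by (rule integral_mult_right)
  ultimately have "- 2 * \<beta> * integral {0..t} (\<lambda>s. qt s * inverse (sol \<alpha> \<beta> s))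
      = inverse (sol \<alpha> \<beta> t) ^ 2 + 2 * \<alpha> * Pf t - (inverse (sol \<alpha> \<beta> 0) ^ 2 + 2 * \<alpha> * Pf 0)"
    by (simp only:)
  then show ?thesis using Pf_0 sol_at_0[OF assms(1)] by (simp add: algebra_simps)
qed

lemma sol_alpha_0: "small_params 0 \<beta> \<Longrightarrow> t \<in> {0..1} \<Longrightarrow> sol 0 \<beta> t = inverse (1 - \<beta> * Qf t)"
  using inverse_sol_eq[of 0 \<beta> t] by (metis diff_zero inverse_inverse_eq mult_zero_left)

lemma inverse_sol_beta_0_squared:
  "small_params \<alpha> 0 \<Longrightarrow> t \<in> {0..1} \<Longrightarrow> inverse (sol \<alpha> 0 t) ^ 2 = 1 - 2 * \<alpha> * Pf t"
  using inverse_sol_squared_eq[of \<alpha> 0 t] by simp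

lemma sol_0_0: "t \<in> {0..1} \<Longrightarrow> sol 0 0 t = 1"
  using sol_alpha_0[of 0 t] Mp_ge_1 Mq_ge_1 by (simp add: small_params_def)

lemma integral_pt_sol_eq_0:
  assumes "small_params \<alpha> \<beta>" "\<alpha> \<noteq> 0" "sol \<alpha> \<beta> 1 = 1"
  shows "integral {0..1} (\<lambda>s. pt s * sol \<alpha> \<beta> s) = 0"
  using inverse_sol_eq[OF assms(1), of 1] assms(2,3) Qf_1 by simp

lemma integral_qt_inverse_sol_eq_0:
  assumes "small_params \<alpha> \<beta>" "\<beta> \<noteq> 0" "sol \<alpha> \<beta> 1 = 1"
  shows "integral {0..1} (\<lambda>s. qt s * inverse (sol \<alpha> \<beta> s)) = 0"
  using inverse_sol_squared_eq[OF assms(1), of 1] assms(2,3) Pf_1 by simp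

lemma norm_inverse_sol_diff_le:
  assumes "small_params \<alpha> \<beta>" "small_params \<alpha>' \<beta>'" "t \<in> {0..1}"
  shows "norm (inverse (sol \<alpha> \<beta> t) - inverse (sol \<alpha>' \<beta>' t)) \<le> 8 * rhs_bound (\<alpha> - \<alpha>') (\<beta> - \<beta>')"
proof -
  let ?y = "sol \<alpha> \<beta> t" and ?z = "sol \<alpha>' \<beta>' t"
  have "1/2 * (1/2) \<le> norm ?y * norm ?z"
    using norm_sol_ge_half[OF assms(1,3)] norm_sol_ge_half[OF assms(2,3)] by (intro mult_mono) auto
  then have N: "1 \<le> 4 * (norm ?y * norm ?z)" by simp
  then have "norm (?z - ?y) / (norm ?y * norm ?z) \<le> norm (?z - ?y) * 4"
    using mult_left_mono[OF N, of "norm (?z - ?y)"] by (simp add: divide_le_eq algebra_simps)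
  moreover have "inverse ?y - inverse ?z = (?z - ?y) / (?y * ?z)"
    using sol_nonzero[OF assms(1,3)] sol_nonzero[OF assms(2,3)] by (simp add: field_simps)
  ultimately show ?thesis
    using norm_sol_diff_le[OF assms] by (simp add: norm_divide norm_mult norm_minus_commute)
qed

lemma norm_inverse_sol_sub_1_le:
  assumes "small_params \<alpha> \<beta>" "t \<in> {0..1}"
  shows "norm (inverse (sol \<alpha> \<beta> t) - 1) \<le> 8 * rhs_bound \<alpha> \<beta>"
proof -
  have "small_params 0 0" using Mp_ge_1 Mq_ge_1 by (simp add: small_params_def)
  then show ?thesis using norm_inverse_sol_diff_le[OF assms(1) _ assms(2), of 0 0] sol_0_0[OF assms(2)] by simp
qed

lemma integral_pt_sol_alpha_0_eq_0:
  assumes "norm \<beta> \<le> 1/(12*Mq)" "r > 0" "\<And>\<alpha>::real. 0 < \<alpha> \<Longrightarrow> \<alpha> < r \<Longrightarrow> sol (of_real \<alpha>) \<beta> 1 = 1"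
  shows "integral {0..1} (\<lambda>s. pt s * sol 0 \<beta> s) = 0"
proof (rule integral_eq_0_of_approx[where C = "Mp * (2 * (Mp * (27/8)))"])
  show "min r (1/(27*Mp)) > 0" using assms Mp_ge_1 by simp
  have small: "small_params (of_real e) \<beta>" if "0 < e" "e < min r (1/(27*Mp))" for e
    using that assms(1) by (simp add: small_params_def)
  have small0: "small_params 0 \<beta>" using assms(1) Mp_ge_1 by (simp add: small_params_def)
  show "continuous_on {0..1} (\<lambda>s. pt s * sol 0 \<beta> s)"
    by (intro continuous_intros continuous_pt continuous_on_sol small0)
  fix e :: real assume e: "0 < e" "e < min r (1/(27*Mp))"
  show "continuous_on {0..1} (\<lambda>s. pt s * sol (of_real e) \<beta> s)"
    by (intro continuous_intros continuous_pt continuous_on_sol small[OF e])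
  show "integral {0..1} (\<lambda>s. pt s * sol (of_real e) \<beta> s) = 0"
    using e by (intro integral_pt_sol_eq_0 small assms(3)) auto
  fix s :: real assume s: "s \<in> {0..1}"
  have "norm (sol 0 \<beta> s - sol (of_real e) \<beta> s) \<le> 2 * (Mp * (27/8)) * e"
    using norm_sol_diff_le[OF small0 small[OF e] s] e by (simp add: rhs_bound_def)
  then show "norm (pt s * sol 0 \<beta> s - pt s * sol (of_real e) \<beta> s) \<le> Mp * (2 * (Mp * (27/8))) * e"
    unfolding right_diff_distrib[symmetric] norm_mult mult.assoc
    using norm_pt_le[OF s] Mp_ge_1 by (intro mult_mono) auto
qed

lemma integral_qt_inverse_sol_beta_0_eq_0:
  assumes "norm \<alpha> \<le> 1/(27*Mp)" "r > 0" "\<And>\<beta>::real. 0 < \<beta> \<Longrightarrow> \<beta> < r \<Longrightarrow> sol \<alpha> (of_real \<beta>) 1 = 1"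
  shows "integral {0..1} (\<lambda>s. qt s * inverse (sol \<alpha> 0 s)) = 0"
proof (rule integral_eq_0_of_approx[where C = "Mq * (8 * (Mq * (9/4)))"])
  show "min r (1/(12*Mq)) > 0" using assms Mq_ge_1 by simp
  have small: "small_params \<alpha> (of_real e)" if "0 < e" "e < min r (1/(12*Mq))" for e
    using that assms(1) by (simp add: small_params_def)
  have small0: "small_params \<alpha> 0" using assms(1) Mq_ge_1 by (simp add: small_params_def)
  show "continuous_on {0..1} (\<lambda>s. qt s * inverse (sol \<alpha> 0 s))"
    by (intro continuous_intros continuous_qt continuous_on_inverse_sol small0)
  fix e :: real assume e: "0 < e" "e < min r (1/(12*Mq))"
  show "continuous_on {0..1} (\<lambda>s. qt s * inverse (sol \<alpha> (of_real e) s))"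
    by (intro continuous_intros continuous_qt continuous_on_inverse_sol small[OF e])
  show "integral {0..1} (\<lambda>s. qt s * inverse (sol \<alpha> (of_real e) s)) = 0"
    using e by (intro integral_qt_inverse_sol_eq_0 small assms(3)) auto
  fix s :: real assume s: "s \<in> {0..1}"
  have "norm (inverse (sol \<alpha> 0 s) - inverse (sol \<alpha> (of_real e) s)) \<le> 8 * (Mq * (9/4)) * e"
    using norm_inverse_sol_diff_le[OF small0 small[OF e] s] e by (simp add: rhs_bound_def)
  then show "norm (qt s * inverse (sol \<alpha> 0 s) - qt s * inverse (sol \<alpha> (of_real e) s)) \<le> Mq * (8 * (Mq * (9/4))) * e"
    unfolding right_diff_distrib[symmetric] norm_mult mult.assoc
    using norm_qt_le[OF s] Mq_ge_1 by (intro mult_mono) auto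
qed

end

section \<open>Vanishing moments from a parametric centre\<close>

context abel_ode
begin

definition returns :: "complex \<Rightarrow> bool" where
  "returns \<epsilon> \<longleftrightarrow> (\<exists>\<delta>>0. \<forall>\<mu>::real. 0 < \<mu> \<and> \<mu> < \<delta> \<and> small_params (of_real (\<mu>^2)) (\<epsilon> * of_real \<mu>) \<longrightarrow>
     sol (of_real (\<mu>^2)) (\<epsilon> * of_real \<mu>) 1 = 1)"

lemma sol_1_eq_1_of_infinite_zeros:
  assumes "norm \<alpha> \<le> 1/(27*Mp)" "Z \<subseteq> cball 0 l" "l < 1/(12*Mq)" "infinite Z"
    and "\<And>z. z \<in> Z \<Longrightarrow> sol \<alpha> z 1 = 1" "norm \<beta> < 1/(12*Mq)"
  shows "sol \<alpha> \<beta> 1 = 1"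
proof -
  have "(\<lambda>\<beta>. sol \<alpha> \<beta> 1 - 1) \<beta> = 0"
  proof (rule holomorphic_eq_0_of_infinite_zeros[where f = "\<lambda>\<beta>. sol \<alpha> \<beta> 1 - 1"
        and S = "ball 0 (1/(12*Mq))" and K = "cball 0 l" and Z = Z and w = \<beta>])
    show "(\<lambda>\<beta>. sol \<alpha> \<beta> 1 - 1) holomorphic_on ball 0 (1/(12*Mq))"
      by (intro holomorphic_intros sol_holomorphic assms(1))
    show "cball 0 l \<subseteq> ball 0 (1/(12*Mq))" using assms(3) by (simp add: subset_eq)
  qed (use assms in simp_all)
  then show ?thesis by simp
qed

text \<open>Uncountably many \<open>\<epsilon>\<close> return for all \<open>\<mu> < d\<close>; for \<open>\<alpha> = l\<^sup>2\<close> with \<open>l < d\<close> the points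
  \<open>\<epsilon> l\<close> are then infinitely many zeros of \<open>\<beta> \<mapsto> sol \<alpha> \<beta> 1 - 1\<close> in a compact disc.\<close>

lemma sol_1_eq_1_of_returns:
  assumes "\<And>\<epsilon>. returns \<epsilon>"
  obtains a where "a > 0" "\<And>\<alpha> \<beta>. 0 < \<alpha> \<Longrightarrow> \<alpha> < a \<Longrightarrow> norm \<beta> < 1/(12*Mq) \<Longrightarrow> sol (of_real \<alpha>) \<beta> 1 = 1"
proof -
  have "\<forall>\<epsilon>. \<exists>\<delta>. \<delta> > 0 \<and> (\<forall>\<mu>::real. 0 < \<mu> \<and> \<mu> < \<delta> \<and> small_params (of_real (\<mu>^2)) (\<epsilon> * of_real \<mu>) \<longrightarrow>
             sol (of_real (\<mu>^2)) (\<epsilon> * of_real \<mu>) 1 = 1)"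
    using assms unfolding returns_def by blast
  then obtain \<delta> where \<delta>: "\<And>\<epsilon>. \<delta> \<epsilon> > 0"
    and return: "\<And>\<epsilon> \<mu>. 0 < \<mu> \<Longrightarrow> \<mu> < \<delta> \<epsilon> \<Longrightarrow> small_params (of_real (\<mu>^2)) (\<epsilon> * of_real \<mu>) \<Longrightarrow>
                 sol (of_real (\<mu>^2)) (\<epsilon> * of_real \<mu>) 1 = 1"
    by (metis choice)
  obtain d where d: "d > 0" "infinite {\<epsilon> \<in> ball 0 1. d < \<delta> \<epsilon>}"
    by (rule infinite_superlevel_set_in_ball[OF \<delta>])
  define l0 where "l0 = min d (min (1/(24*Mq)) (sqrt (1/(27*Mp))))"
  have l0: "l0 > 0" using d Mp_ge_1 Mq_ge_1 by (simp add: l0_def)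
  show ?thesis
  proof (rule that[of "l0^2"])
    show "l0^2 > 0" using l0 by simp
    fix \<alpha> :: real and \<beta> :: complex
    assume \<alpha>: "0 < \<alpha>" "\<alpha> < l0^2" and \<beta>: "norm \<beta> < 1/(12*Mq)"
    define l where "l = sqrt \<alpha>"
    have l: "l > 0" "l^2 = \<alpha>" using \<alpha> by (auto simp: l_def)
    have "l < sqrt (l0^2)" unfolding l_def using \<alpha> by (intro real_sqrt_less_mono)
    then have "l < l0" using l0 by simp
    then have l_lt: "l < d" "l < 1/(24*Mq)" "l < sqrt (1/(27*Mp))" by (simp_all add: l0_def)
    have "l^2 < (sqrt (1/(27*Mp)))^2" using l l_lt by (intro power_strict_mono) simp_all
    then have small_\<alpha>: "norm (of_real \<alpha> :: complex) \<le> 1/(27*Mp)" using l \<alpha>(1) Mp_ge_1 by simp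
    have l_small: "l < 1/(12*Mq)" using l_lt Mq_ge_1 by (simp add: field_simps)
    have norm_le: "norm (\<epsilon> * of_real l) \<le> l" if "norm \<epsilon> < 1" for \<epsilon> :: complex
      using that l by (simp add: norm_mult mult_left_le_one_le)
    define Z where "Z = (\<lambda>\<epsilon>. \<epsilon> * of_real l) ` {\<epsilon> \<in> ball 0 1. d < \<delta> \<epsilon>}"
    show "sol (of_real \<alpha>) \<beta> 1 = 1"
    proof (rule sol_1_eq_1_of_infinite_zeros[OF small_\<alpha> _ l_small _ _ \<beta>])
      show "Z \<subseteq> cball 0 l" using norm_le by (auto simp: Z_def)
      have "inj_on (\<lambda>\<epsilon>. \<epsilon> * (of_real l :: complex)) {\<epsilon> \<in> ball 0 1. d < \<delta> \<epsilon>}"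
        using l by (simp add: inj_on_def)
      then show "infinite Z" unfolding Z_def using d(2) finite_imageD by blast
      fix z assume "z \<in> Z"
      then obtain \<epsilon> where \<epsilon>: "norm \<epsilon> < 1" "d < \<delta> \<epsilon>" and z: "z = \<epsilon> * of_real l" by (auto simp: Z_def)
      have "norm (\<epsilon> * of_real l) \<le> 1/(12*Mq)" using norm_le[OF \<epsilon>(1)] l_small by linarith
      then have "small_params (of_real (l^2)) (\<epsilon> * of_real l)"
        using small_\<alpha> l by (simp add: small_params_def)
      then show "sol (of_real \<alpha>) z 1 = 1" using return[of l \<epsilon>] l l_lt \<epsilon>(2) z by simp
    qed
  qed
qed

text \<open>For \<open>w = sol (\<mu>\<^sup>2) (\<epsilon> \<mu>)\<close> the function \<open>y = \<mu> w\<close> solves the Abel equation with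
  parameter \<open>\<epsilon>\<close> and starts at \<open>\<mu>\<close>, so the centre condition applies to it.\<close>

lemma returns_of_abel_center:
  assumes "abel_center p q \<epsilon> a b"
    and "\<And>s. pt s = (b - a) * poly p (linepath a b s)" "\<And>s. qt s = (b - a) * poly q (linepath a b s)"
  shows "returns \<epsilon>"
proof -
  obtain \<delta> where \<delta>: "\<delta> > 0" and centre: "\<And>y :: real \<Rightarrow> complex. norm (y 0) < \<delta> \<and>
      (\<forall>t\<in>{0..1}. (y has_vector_derivative
          ((b - a) * (poly p (linepath a b t) * (y t)^3 + \<epsilon> * poly q (linepath a b t) * (y t)^2)))
          (at t within {0..1})) \<Longrightarrow> y 1 = y 0"
    using assms(1) unfolding abel_center_def by blast
  have "sol (of_real (\<mu>^2)) (\<epsilon> * of_real \<mu>) 1 = 1"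
    if \<mu>: "0 < \<mu>" "\<mu> < \<delta>" and small: "small_params (of_real (\<mu>^2)) (\<epsilon> * of_real \<mu>)" for \<mu> :: real
  proof -
    define w where "w = sol (of_real (\<mu>^2)) (\<epsilon> * of_real \<mu>)"
    have w0: "w 0 = 1" unfolding w_def using sol_at_0[OF small] .
    have "(\<lambda>t. of_real \<mu> * w t) 1 = (\<lambda>t. of_real \<mu> * w t) 0"
    proof (rule centre, intro conjI ballI)
      show "norm (of_real \<mu> * w 0) < \<delta>" using \<mu> w0 by simp
      fix t :: real assume t: "t \<in> {0..1}"
      have "of_real \<mu> * rhs (of_real (\<mu>^2)) (\<epsilon> * of_real \<mu>) t (w t)
          = (b - a) * (poly p (linepath a b t) * (of_real \<mu> * w t)^3
              + \<epsilon> * poly q (linepath a b t) * (of_real \<mu> * w t)^2)"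
        unfolding rhs_def assms(2,3) by (simp add: algebra_simps power2_eq_square power3_eq_cube)
      with has_vector_derivative_mult_right[OF sol_has_vector_derivative[OF small t], of "of_real \<mu>"]
      show "((\<lambda>t. of_real \<mu> * w t) has_vector_derivative (b - a) * (poly p (linepath a b t) * (of_real \<mu> * w t)^3
          + \<epsilon> * poly q (linepath a b t) * (of_real \<mu> * w t)^2)) (at t within {0..1})"
        unfolding w_def by simp
    qed
    then show ?thesis using \<mu> w0 by (simp add: w_def)
  qed
  with \<delta> show ?thesis unfolding returns_def by blast
qed

end

context abel_ode_ends
begin

lemma moments_pt_Qf_eq_0:
  assumes "r > 0" "\<And>\<beta>::real. 0 < \<beta> \<Longrightarrow> \<beta> < r \<Longrightarrow> integral {0..1} (\<lambda>s. pt s * sol 0 (of_real \<beta>) s) = 0"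
  shows "integral {0..1} (\<lambda>s. pt s * Qf s ^ k) = 0"
proof (rule moments_eq_0_of_series_approx[where c = "\<lambda>_. 1" and r = "min r (1/(12*Mq))"])
  have small: "small_params 0 (of_real e)" if "0 < e" "e < 1/(12*Mq)" for e
    using that Mp_ge_1 by (simp add: small_params_def)
  show "min r (1/(12*Mq)) > 0" using assms(1) Mq_ge_1 by simp
  fix e :: real assume e: "0 < e" "e < min r (1/(12*Mq))"
  show "continuous_on {0..1} (sol 0 (of_real e))" using e by (intro continuous_on_sol small) auto
  show "integral {0..1} (\<lambda>s. pt s * sol 0 (of_real e) s) = 0" using e by (intro assms(2)) auto
next
  fix k
  obtain M where M: "M \<ge> 1" "\<And>s. s \<in> {0..1} \<Longrightarrow> norm (Qf s) \<le> M"
    using bounded_on_unit_interval[OF continuous_on_Qf] by blast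
  have "norm (sol 0 (of_real e) s - (\<Sum>i\<le>k. 1 * (of_real e * Qf s) ^ i)) \<le> 2 * M ^ (k+1) * e ^ (k+1)"
    if e: "0 < e" "e < min (1/(12*Mq)) (1/(2*M))" and s: "s \<in> {0..1}" for e s
  proof -
    have x: "norm (of_real e * Qf s) \<le> e * M" using M(2)[OF s] e by (simp add: norm_mult mult_left_mono)
    also have "e * M \<le> 1/2" using e M(1) by (simp add: field_simps)
    finally have "norm (inverse (1 - of_real e * Qf s) - (\<Sum>i\<le>k. (of_real e * Qf s) ^ i))
        \<le> 2 * norm (of_real e * Qf s) ^ (k+1)"
      by (rule norm_inverse_one_minus_sub_sum_le)
    also have "\<dots> \<le> 2 * (e * M) ^ (k+1)" using x by (intro mult_left_mono power_mono) auto
    finally show ?thesis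
      using sol_alpha_0[OF _ s, of "of_real e"] e Mp_ge_1
      by (simp add: small_params_def power_mult_distrib mult_ac)
  qed
  moreover have "min (1/(12*Mq)) (1/(2*M)) > 0" using Mq_ge_1 M(1) by simp
  ultimately show "\<exists>r'>0. \<exists>C. \<forall>e s. 0 < e \<and> e < r' \<and> s \<in> {0..1} \<longrightarrow>
      norm (sol 0 (of_real e) s - (\<Sum>i\<le>k. 1 * (of_real e * Qf s) ^ i)) \<le> C * e ^ (k+1)"
    by blast
qed (simp_all add: continuous_pt continuous_on_Qf)


lemma moments_qt_Pf_eq_0:
  assumes "r > 0" "\<And>\<alpha>::real. 0 < \<alpha> \<Longrightarrow> \<alpha> < r \<Longrightarrow> integral {0..1} (\<lambda>s. qt s * inverse (sol (of_real \<alpha>) 0 s)) = 0"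
  shows "integral {0..1} (\<lambda>s. qt s * Pf s ^ k) = 0"
proof (rule moments_eq_0_of_series_approx[where c = sqrt_coeff and r = "min r (1/(27*Mp))"])
  have small: "small_params (of_real e) 0" if "0 < e" "e < 1/(27*Mp)" for e
    using that Mq_ge_1 by (simp add: small_params_def)
  show "min r (1/(27*Mp)) > 0" using assms(1) Mp_ge_1 by simp
  fix e :: real assume e: "0 < e" "e < min r (1/(27*Mp))"
  show "continuous_on {0..1} (\<lambda>s. inverse (sol (of_real e) 0 s))"
    using e by (intro continuous_on_inverse_sol small) auto
  show "integral {0..1} (\<lambda>s. qt s * inverse (sol (of_real e) 0 s)) = 0" using e by (intro assms(2)) auto
next
  fix k
  define A where "A = (\<Sum>i\<le>k. norm (sqrt_coeff i))"
  obtain M where M: "M \<ge> 1" "\<And>s. s \<in> {0..1} \<Longrightarrow> norm (Pf s) \<le> M"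
    using bounded_on_unit_interval[OF continuous_on_Pf] by blast
  have A2: "2*A+2 > 0" by (simp add: A_def sum_nonneg add_nonneg_pos)
  then have MA: "M * (2*A+2) > 0" using M(1) by simp
  have "norm (inverse (sol (of_real e) 0 s) - (\<Sum>i\<le>k. sqrt_coeff i * (of_real e * Pf s) ^ i))
      \<le> (A^2 + 2) * M ^ (k+1) * e ^ (k+1)"
    if e: "0 < e" "e < min (1/(54*Mp)) (1/(M*(2*A+2)))" and s: "s \<in> {0..1}" for e s
  proof -
    let ?x = "of_real e * Pf s"
    have e54: "e * (54 * Mp) < 1" using e Mp_ge_1 by (simp add: pos_less_divide_eq)
    then have small_e: "small_params (of_real e) 0"
      using e Mp_ge_1 Mq_ge_1 by (simp add: small_params_def field_simps)
    have "norm (inverse (sol (of_real e) 0 s) - 1) \<le> 27 * Mp * e"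
      using norm_inverse_sol_sub_1_le[OF small_e s] e by (simp add: rhs_bound_def)
    with e54 have h1: "norm (inverse (sol (of_real e) 0 s) - 1) \<le> 1/2" by (simp add: mult_ac)
    have h2: "inverse (sol (of_real e) 0 s) ^ 2 = 1 - 2 * ?x"
      using inverse_sol_beta_0_squared[OF small_e s] by (simp add: mult.assoc)
    have x: "norm ?x \<le> e * M" using M(2)[OF s] e by (simp add: norm_mult mult_left_mono)
    have "e * (M * (2*A+2)) < 1" using e MA by (simp add: pos_less_divide_eq)
    then have "e * M \<le> 1/(2*A+2)" using A2 by (simp add: pos_le_divide_eq mult.assoc)
    then have "norm (inverse (sol (of_real e) 0 s) - sqrt_taylor k ?x) \<le> (A^2 + 2) * norm ?x ^ (k+1)"
      unfolding A_def using x by (intro norm_sqrt_sub_sqrt_taylor_le[OF h2 h1]) simp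
    also have "\<dots> \<le> (A^2 + 2) * (e * M) ^ (k+1)" using x by (intro mult_left_mono power_mono) auto
    finally show ?thesis by (simp add: sqrt_taylor_def power_mult_distrib mult_ac)
  qed
  moreover have "min (1/(54*Mp)) (1/(M*(2*A+2))) > 0" using Mp_ge_1 MA by simp
  ultimately show "\<exists>r'>0. \<exists>C. \<forall>e s. 0 < e \<and> e < r' \<and> s \<in> {0..1} \<longrightarrow>
      norm (inverse (sol (of_real e) 0 s) - (\<Sum>i\<le>k. sqrt_coeff i * (of_real e * Pf s) ^ i)) \<le> C * e ^ (k+1)"
    by blast
qed (simp_all add: continuous_qt continuous_on_Pf sqrt_coeff_nonzero)

lemma moments_eq_0_of_returns:
  assumes "\<And>\<epsilon>. returns \<epsilon>"
  shows "integral {0..1} (\<lambda>s. pt s * Qf s ^ k) = 0" "integral {0..1} (\<lambda>s. qt s * Pf s ^ k) = 0"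
proof -
  obtain a where a: "a > 0" "\<And>\<alpha> \<beta>. 0 < \<alpha> \<Longrightarrow> \<alpha> < a \<Longrightarrow> norm \<beta> < 1/(12*Mq) \<Longrightarrow> sol (of_real \<alpha>) \<beta> 1 = 1"
    using sol_1_eq_1_of_returns[OF assms] by blast
  show "integral {0..1} (\<lambda>s. pt s * Qf s ^ k) = 0"
  proof (rule moments_pt_Qf_eq_0)
    show "1/(12*Mq) > 0" using Mq_ge_1 by simp
    fix \<beta> :: real assume \<beta>: "0 < \<beta>" "\<beta> < 1/(12*Mq)"
    show "integral {0..1} (\<lambda>s. pt s * sol 0 (of_real \<beta>) s) = 0"
      by (rule integral_pt_sol_alpha_0_eq_0[OF _ a(1)]) (use \<beta> a(2) in auto)
  qed
  show "integral {0..1} (\<lambda>s. qt s * Pf s ^ k) = 0"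
  proof (rule moments_qt_Pf_eq_0)
    show "min a (1/(27*Mp)) > 0" using a(1) Mp_ge_1 by simp
    fix \<alpha> :: real assume \<alpha>: "0 < \<alpha>" "\<alpha> < min a (1/(27*Mp))"
    show "integral {0..1} (\<lambda>s. qt s * inverse (sol (of_real \<alpha>) 0 s)) = 0"
      by (rule integral_qt_inverse_sol_beta_0_eq_0[of _ "1/(12*Mq)"]) (use \<alpha> a(2) Mq_ge_1 in auto)
  qed
qed

lemma moments_eq_0_of_parametric_center:
  assumes "parametric_center p q a b"
    and "\<And>s. pt s = (b - a) * poly p (linepath a b s)" "\<And>s. qt s = (b - a) * poly q (linepath a b s)"
  shows "integral {0..1} (\<lambda>s. pt s * Qf s ^ k) = 0" "integral {0..1} (\<lambda>s. qt s * Pf s ^ k) = 0"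
  using moments_eq_0_of_returns returns_of_abel_center assms unfolding parametric_center_def by blast+

end

definition poly_along :: "complex \<Rightarrow> complex \<Rightarrow> complex poly \<Rightarrow> real \<Rightarrow> complex" where
  "poly_along a b R s = poly R (linepath a b s)"

definition deriv_along :: "complex \<Rightarrow> complex \<Rightarrow> complex poly \<Rightarrow> real \<Rightarrow> complex" where
  "deriv_along a b R s = (b - a) * poly (pderiv R) (linepath a b s)"

lemma poly_along_has_vector_derivative:
  "(poly_along a b R has_vector_derivative deriv_along a b R s) (at s within S)"
  using field_vector_diff_chain_within[OF has_vector_derivative_linepath_within[of a b s S]
      has_field_derivative_at_within[OF poly_DERIV[of R "linepath a b s"]]]
  by (simp add: o_def poly_along_def[abs_def] deriv_along_def mult.commute)

lemma abel_ode_ends_along: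
  assumes "poly P a = 0" "poly P b = 0" "poly Q a = 0" "poly Q b = 0"
  obtains Mp Mq where
    "abel_ode_ends (deriv_along a b P) (deriv_along a b Q) Mp Mq (poly_along a b P) (poly_along a b Q)"
proof -
  have cont: "continuous_on {0..1} (deriv_along a b R)" for R
    unfolding deriv_along_def[abs_def] by (intro continuous_intros continuous_on_linepath)
  obtain Mp where Mp: "Mp \<ge> 1" "\<And>s. s \<in> {0..1} \<Longrightarrow> norm (deriv_along a b P s) \<le> Mp"
    using bounded_on_unit_interval[OF cont] by blast
  obtain Mq where Mq: "Mq \<ge> 1" "\<And>s. s \<in> {0..1} \<Longrightarrow> norm (deriv_along a b Q s) \<le> Mq"
    using bounded_on_unit_interval[OF cont] by blast
  show ?thesis
    by (rule that[of Mp Mq], unfold_locales)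
       (use cont Mp Mq assms in
         \<open>simp_all add: poly_along_has_vector_derivative poly_along_def linepath_0' linepath_1'\<close>)
qed

lemma contour_integral_linepath_poly_moment:
  "contour_integral (linepath a b) (\<lambda>x. poly (R ^ i * pderiv S) x)
    = integral {0..1} (\<lambda>s. deriv_along a b S s * poly_along a b R s ^ i)"
  unfolding contour_integral_integral vector_derivative_linepath_at deriv_along_def poly_along_def
  by (simp add: poly_power algebra_simps)

lemma composition_condition_or_non_definite:
  assumes "P \<in> vanish_ends a b" "Q \<in> vanish_ends a b" "P \<in> Zset Q a b" "Q \<in> Zset P a b"
  shows "composition_condition P Q a b \<or>
         (non_definite P a b \<and> non_definite Q a b \<and> P \<in> Zset Q a b \<and> Q \<in> Zset P a b)"
proof -
  have "composition_condition Q P a b \<longleftrightarrow> composition_condition P Q a b"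
    unfolding composition_condition_def by blast
  then show ?thesis using assms unfolding non_definite_def definite_def by blast
qed

theorem theorem4p1:
  fixes a b :: complex and P Q :: "complex poly"
  assumes "a \<noteq> b"
    and "poly P a = 0" "poly P b = 0" "poly Q a = 0" "poly Q b = 0"
    and "parametric_center (pderiv P) (pderiv Q) a b"
  shows "composition_condition P Q a b \<or>
         (non_definite P a b \<and> non_definite Q a b \<and> P \<in> Zset Q a b \<and> Q \<in> Zset P a b)"
proof -
  obtain Mp Mq where
    L: "abel_ode_ends (deriv_along a b P) (deriv_along a b Q) Mp Mq (poly_along a b P) (poly_along a b Q)"
    using abel_ode_ends_along[OF assms(2-5)] .
  note moments = abel_ode_ends.moments_eq_0_of_parametric_center[OF L assms(6) deriv_along_def deriv_along_def]
  have "P \<in> Zset Q a b" "Q \<in> Zset P a b"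
    unfolding Zset_def vanish_ends_def contour_integral_linepath_poly_moment using moments assms(2-5) by simp_all
  then show ?thesis
    using assms(2-5) by (intro composition_condition_or_non_definite) (simp_all add: vanish_ends_def)
qed

end
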